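(* Let $n\in\mathbb N$, let $A$ be a Young function satisfying (C1), (C2), (C3), let $B$ be the associated function, and let $\varphi$ be a gauge function. For $r>0$ define $J_r(0)=0$ and $J_r(s)=s\,B^{-1}(r\varphi(s)/s^n)$ for $s>0$. Then for each $r>0$ the function $J_r$ is increasing and bijective on $[0,\infty)$; for each fixed $s>0$ the map $r\mapsto J_r^{-1}(s)$ is non-increasing on $(0,\infty)$; and $$\varphi\big(J_r^{-1}(st)\big)\le\varphi(t)+\frac{t^n}{r}B(s)\qquad\text{for all } s,t>0,\ r>0.$$
   Context: A gauge function is a function $\varphi\colon[0,\infty)\to[0,\infty)$ that is increasing, continuous and vanishes only at $0$, and (standing assumption) such that $r\mapsto\varphi(r)/r^n$ is non-increasing on $(0,\infty)$. A Young function is a non-trivial convex $A\colon[0,\infty)\to[0,\infty]$ with $A(0)=0$; $\widetilde A(t)=\sup_{\tau\ge0}(\tau t-A(\tau))$. Conditions: (C1) if $n=1$, $\lim_{t\to\infty}t/A(t)=0$; if $n\ge2$, $\int^\infty (t/A(t))^{1/(n-1)}dt<\infty$. (C2) $0<A(t)<\infty$ for $t>0$. (C3) if $n=1$, $\lim_{t\to0^+}t/A(t)=\infty$; if $n\ge2$, $\int_0(t/A(t))^{1/(n-1)}dt=\infty$. $B=A$ if $n=1$; for $n\ge2$, $B$ is the Young conjugate of $t\mapsto t^{n'}\int_t^\infty\widetilde A(s)s^{-1-n'}ds$, $n'=n/(n-1)$. *)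

theory Defs
  imports "HOL-Analysis.Analysis"
begin

text \<open>Young function (finite-valued version; condition (C2) forces finiteness on [0,oo)).
  Only the values on [0,oo) are relevant.\<close>
definition young_function :: "(real \<Rightarrow> real) \<Rightarrow> bool" where
  "young_function A \<longleftrightarrow> convex_on {0..} A \<and> A 0 = 0 \<and> (\<forall>t\<ge>0. 0 \<le> A t) \<and> (\<exists>t>0. A t \<noteq> 0)"

definition young_conj :: "(real \<Rightarrow> ereal) \<Rightarrow> real \<Rightarrow> ereal" where
  "young_conj F t = (SUP \<tau>\<in>{0..}. ereal (\<tau> * t) - F \<tau>)"

definition cond_C1 :: "nat \<Rightarrow> (real \<Rightarrow> real) \<Rightarrow> bool" where
  "cond_C1 n A \<longleftrightarrow> (if n = 1 then ((\<lambda>t. t / A t) \<longlongrightarrow> 0) at_top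
     else (\<integral>\<^sup>+ t. indicator {1..} t * ennreal ((t / A t) powr (1 / (real n - 1))) \<partial>lborel) < \<infinity>)"

definition cond_C2 :: "(real \<Rightarrow> real) \<Rightarrow> bool" where
  "cond_C2 A \<longleftrightarrow> (\<forall>t>0. 0 < A t)"

definition cond_C3 :: "nat \<Rightarrow> (real \<Rightarrow> real) \<Rightarrow> bool" where
  "cond_C3 n A \<longleftrightarrow> (if n = 1 then filterlim (\<lambda>t. t / A t) at_top (at_right 0)
     else (\<integral>\<^sup>+ t. indicator {0<..1} t * ennreal ((t / A t) powr (1 / (real n - 1))) \<partial>lborel) = \<infinity>)"

definition nprime :: "nat \<Rightarrow> real" where
  "nprime n = real n / (real n - 1)"

definition E_fun :: "nat \<Rightarrow> (real \<Rightarrow> real) \<Rightarrow> real \<Rightarrow> ennreal" where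
  "E_fun n A t = ennreal (t powr nprime n) *
     (\<integral>\<^sup>+ s. indicator {t<..} s * e2ennreal (young_conj (\<lambda>\<tau>. ereal (A \<tau>)) s)
              * ennreal (s powr (- 1 - nprime n)) \<partial>lborel)"

definition B_fun :: "nat \<Rightarrow> (real \<Rightarrow> real) \<Rightarrow> real \<Rightarrow> ereal" where
  "B_fun n A t = (if n = 1 then ereal (A t)
                  else young_conj (\<lambda>\<tau>. enn2ereal (E_fun n A \<tau>)) t)"

definition B_inv :: "nat \<Rightarrow> (real \<Rightarrow> real) \<Rightarrow> real \<Rightarrow> real" where
  "B_inv n A u = Sup {t. 0 \<le> t \<and> B_fun n A t \<le> ereal u}"

definition gauge_function :: "nat \<Rightarrow> (real \<Rightarrow> real) \<Rightarrow> bool" where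
  "gauge_function n \<phi> \<longleftrightarrow> \<phi> 0 = 0 \<and> (\<forall>t>0. 0 < \<phi> t) \<and> mono_on {0..} \<phi> \<and>
     continuous_on {0..} \<phi> \<and> antimono_on {0<..} (\<lambda>r. \<phi> r / r ^ n)"

definition J_fun :: "nat \<Rightarrow> (real \<Rightarrow> real) \<Rightarrow> (real \<Rightarrow> real) \<Rightarrow> real \<Rightarrow> real \<Rightarrow> real" where
  "J_fun n A \<phi> r s = (if s = 0 then 0 else s * B_inv n A (r * \<phi> s / s ^ n))"

definition J_inv :: "nat \<Rightarrow> (real \<Rightarrow> real) \<Rightarrow> (real \<Rightarrow> real) \<Rightarrow> real \<Rightarrow> real \<Rightarrow> real" where
  "J_inv n A \<phi> r = the_inv_into {0..} (J_fun n A \<phi> r)"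

end

theory Submission
  imports Defs
begin

text \<open>
  All claims about \<open>J\<^sub>r\<close> follow from four properties of \<open>B\<close>: it is a real function \<open>b\<close>
  with \<open>b(0) = 0\<close>, continuous on \<open>(0, \<infinity>)\<close>, such that \<open>b(t)/t\<^sup>n\<close> is strictly increasing
  and tends to \<open>0\<close> as \<open>t \<rightarrow> 0\<^sup>+\<close>. Then \<open>b\<close> is a bijection of \<open>[0, \<infinity>)\<close>, and
  \<open>J\<^sub>r(s) = s x\<close> with \<open>b(x) = r \<phi>(s)/s\<^sup>n\<close> satisfies \<open>r \<phi>(s) = (b(x)/x\<^sup>n) J\<^sub>r(s)\<^sup>n\<close>.
  Monotonicity of \<open>\<phi>\<close> and of \<open>b(x)/x\<^sup>n\<close> turn this identity into strict monotonicity of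
  \<open>J\<^sub>r\<close>, the intermediate value theorem gives surjectivity, and if
  \<open>\<sigma> = J\<^sub>r\<^sup>-\<^sup>1(st) > t\<close> then \<open>x = st/\<sigma> < s\<close>, whence \<open>r \<phi>(\<sigma>) \<le> (b(s)/s\<^sup>n) (st)\<^sup>n\<close>.

  For \<open>n = 1\<close> we have \<open>B = A\<close>, and the properties follow from convexity and (C3).
  For \<open>n \<ge> 2\<close>, \<open>B\<close> is the conjugate of \<open>E(\<tau>) = \<tau>\<^sup>n\<^sup>' F(\<tau>)\<close>, where
  \<open>F(\<tau>) = \<integral>\<^sub>\<tau>\<^sup>\<infinity> A_conj(s) s\<^sup>-\<^sup>1\<^sup>-\<^sup>n\<^sup>' ds\<close> and \<open>A_conj\<close> is the conjugate of \<open>A\<close>.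
  Layer-cake estimates in terms of the sublevel sets of \<open>A(t)/t\<close> show that \<open>F\<close> is finite
  by (C1) and unbounded near \<open>0\<close> by (C3). Then \<open>B\<close> is finite, \<open>b(t)/t\<^sup>n \<rightarrow> 0\<close> because
  \<open>F\<close> is unbounded, and the strict decrease of \<open>F\<close> makes \<open>b(t)/t\<^sup>n\<close> strictly increasing.
\<close>

section \<open>Convex functions and power integrals\<close>

lemma convex_on_quotient_mono:
  fixes f :: "real \<Rightarrow> real"
  assumes f: "convex_on {0..} f" "f 0 = 0" and xy: "0 < x" "x \<le> y"
  shows "f x / x \<le> f y / y"
proof -
  have "f ((1 - x / y) *\<^sub>R 0 + (x / y) *\<^sub>R y) \<le> (1 - x / y) * f 0 + (x / y) * f y"
    using xy by (intro convex_onD[OF f(1)]) auto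
  then have "f x \<le> x / y * f y" using f(2) xy by simp
  then show ?thesis using xy by (simp add: field_simps)
qed

text \<open>Equality \<open>f x / x = f y / y\<close> for \<open>x < y\<close> would force \<open>f\<close> to be linear on \<open>[0, y]\<close>,
  contradicting \<open>f t / t \<rightarrow> 0\<close>.\<close>
lemma convex_on_quotient_strict_mono:
  fixes f :: "real \<Rightarrow> real"
  assumes f: "convex_on {0..} f" "f 0 = 0" and f_pos: "\<And>t. t > 0 \<Longrightarrow> f t > 0"
    and lim: "((\<lambda>t. f t / t) \<longlongrightarrow> 0) (at_right 0)" and xy: "0 < x" "x < y"
  shows "f x / x < f y / y"
proof (rule ccontr)
  assume not_less: "\<not> f x / x < f y / y"
  define k where "k = f x / x"
  have k: "k > 0" using f_pos[OF xy(1)] xy by (simp add: k_def)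
  have fx: "f x = k * x" using xy by (simp add: k_def)
  have fy: "f y = k * y"
    using not_less convex_on_quotient_mono[OF f xy(1) less_imp_le[OF xy(2)]] xy
    by (simp add: k_def field_simps)
  have lower: "k \<le> f z / z" if z: "0 < z" "z < x" for z
  proof -
    define \<theta> where "\<theta> = (y - x) / (y - z)"
    have \<theta>: "0 < \<theta>" "\<theta> \<le> 1" using z xy by (auto simp: \<theta>_def)
    have "\<theta> * (y - z) = y - x" using z xy by (simp add: \<theta>_def)
    then have eq: "(1 - \<theta>) *\<^sub>R y + \<theta> *\<^sub>R z = x" by (simp add: algebra_simps)
    have "f ((1 - \<theta>) *\<^sub>R y + \<theta> *\<^sub>R z) \<le> (1 - \<theta>) * f y + \<theta> * f z"
      using \<theta> z xy by (intro convex_onD[OF f(1)]) auto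
    then have "k * x \<le> (1 - \<theta>) * (k * y) + \<theta> * f z" unfolding eq fx fy .
    moreover have "k * (\<theta> * (y - z)) = k * (y - x)" using \<open>\<theta> * (y - z) = y - x\<close> by simp
    ultimately have "\<theta> * (k * z) \<le> \<theta> * f z" by (simp add: algebra_simps)
    then show ?thesis using z \<theta> by (simp add: field_simps)
  qed
  have "k \<le> 0"
  proof (rule tendsto_lowerbound[OF lim])
    show "\<forall>\<^sub>F z in at_right 0. k \<le> f z / z"
      unfolding eventually_at_right_field using xy lower by blast
  qed simp
  with k show False by simp
qed

lemma emeasure_lborel_Ici: "emeasure lborel {a::real..} = \<infinity>"
proof (rule ccontr)
  assume "emeasure lborel {a..} \<noteq> \<infinity>"
  then obtain x where x: "emeasure lborel {a..} = ennreal x" "x \<ge> 0"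
    by (cases "emeasure lborel {a..}" rule: ennreal_cases) auto
  have "ennreal (x + 1) = emeasure lborel {a..a + x + 1}"
    using x by simp
  also have "\<dots> \<le> emeasure lborel {a..}"
    by (intro emeasure_mono) auto
  finally have "x + 1 \<le> x" using x by simp
  then show False by simp
qed

lemma nn_integral_powr_Ici:
  fixes a p :: real
  assumes "a > 0" "p > 0"
  shows "(\<integral>\<^sup>+u. indicator {a..} u * ennreal (u powr (-1 - p)) \<partial>lborel) = ennreal (a powr (-p) / p)"
proof -
  have "((\<lambda>x. x powr (-1 - p)) has_integral a powr (-p) / p) {a..}"
    using has_integral_powr_to_inf[of "-1 - p" a] assms by simp
  then have "(\<integral>\<^sup>+u. ennreal (indicator {a..} u * u powr (-1 - p)) \<partial>lborel) = ennreal (a powr (-p) / p)"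
    by (rule nn_integral_has_integral_lebesgue[rotated]) simp
  then show ?thesis by (simp add: indicator_mult_ennreal mult.commute)
qed

lemma nn_integral_powr_Ioi:
  fixes a p :: real
  assumes "a > 0" "p > 0"
  shows "(\<integral>\<^sup>+u. indicator {a<..} u * ennreal (u powr (-1 - p)) \<partial>lborel) = ennreal (a powr (-p) / p)"
proof -
  have "(\<integral>\<^sup>+u. indicator {a<..} u * ennreal (u powr (-1 - p)) \<partial>lborel) =
        (\<integral>\<^sup>+u. indicator {a..} u * ennreal (u powr (-1 - p)) \<partial>lborel)"
    by (intro nn_integral_cong_AE eventually_mono[OF AE_lborel_singleton[of a]])
      (auto simp: indicator_def)
  then show ?thesis using nn_integral_powr_Ici[OF assms] by simp
qed

lemma measurable_emeasure_sublevel[measurable]: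
  fixes g :: "real \<Rightarrow> real"
  assumes [measurable]: "T \<in> sets borel" "g \<in> borel_measurable borel"
  shows "(\<lambda>u. emeasure lborel {t\<in>T. g t \<le> u}) \<in> borel_measurable borel"
proof -
  have "{x \<in> space (lborel \<Otimes>\<^sub>M lborel). snd x \<in> T \<and> g (snd x) \<le> fst (x::real \<times> real)}
      \<in> sets (lborel \<Otimes>\<^sub>M lborel)"
    by measurable
  then have "{(u, t). t \<in> T \<and> g t \<le> u} \<in> sets (lborel \<Otimes>\<^sub>M lborel)"
    by (simp add: case_prod_beta' space_pair_measure Collect_conj_eq)
  from lborel.measurable_emeasure_Pair[OF this] show ?thesis
    by (simp add: vimage_def)
qed

text \<open>Layer-cake formula for the measure \<open>u\<^sup>-\<^sup>1\<^sup>-\<^sup>p du\<close> on \<open>(0, \<infinity>)\<close>.\<close>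
lemma nn_integral_powr_emeasure_sublevel:
  fixes g :: "real \<Rightarrow> real"
  assumes [measurable]: "T \<in> sets borel" "g \<in> borel_measurable borel"
    and g_pos: "\<And>t. t \<in> T \<Longrightarrow> g t > 0" and p: "p > 0"
  shows "(\<integral>\<^sup>+u. indicator {0<..} u * ennreal (u powr (-1 - p)) * emeasure lborel {t\<in>T. g t \<le> u} \<partial>lborel)
       = (\<integral>\<^sup>+t. indicator T t * ennreal (g t powr (-p) / p) \<partial>lborel)"
proof -
  have [measurable]: "{t\<in>T. g t \<le> u} \<in> sets lborel" for u by measurable
  have "(\<integral>\<^sup>+u. indicator {0<..} u * ennreal (u powr (-1 - p)) * emeasure lborel {t\<in>T. g t \<le> u} \<partial>lborel)
      = (\<integral>\<^sup>+u. (\<integral>\<^sup>+t. indicator {0<..} u * ennreal (u powr (-1 - p)) * indicator {t\<in>T. g t \<le> u} t \<partial>lborel) \<partial>lborel)"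
    by (intro nn_integral_cong) (simp add: nn_integral_cmult)
  also have "\<dots> = (\<integral>\<^sup>+t. (\<integral>\<^sup>+u. indicator {0<..} u * ennreal (u powr (-1 - p)) * indicator {t\<in>T. g t \<le> u} t \<partial>lborel) \<partial>lborel)"
    by (rule lborel_pair.Fubini') measurable
  also have "\<dots> = (\<integral>\<^sup>+t. indicator T t * ennreal (g t powr (-p) / p) \<partial>lborel)"
  proof (intro nn_integral_cong)
    fix t :: real
    show "(\<integral>\<^sup>+u. indicator {0<..} u * ennreal (u powr (-1 - p)) * indicator {t\<in>T. g t \<le> u} t \<partial>lborel)
        = indicator T t * ennreal (g t powr (-p) / p)"
    proof (cases "t \<in> T")
      case True
      have "(\<integral>\<^sup>+u. indicator {0<..} u * ennreal (u powr (-1 - p)) * indicator {t\<in>T. g t \<le> u} t \<partial>lborel)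
          = (\<integral>\<^sup>+u. indicator {g t..} u * ennreal (u powr (-1 - p)) \<partial>lborel)"
        using True g_pos[OF True] by (intro nn_integral_cong) (auto simp: indicator_def)
      also have "\<dots> = ennreal (g t powr (-p) / p)" by (rule nn_integral_powr_Ici[OF g_pos[OF True] p])
      finally show ?thesis using True by simp
    qed simp
  qed
  finally show ?thesis .
qed

section \<open>The functions \<open>J\<^sub>r\<close> for a regular \<open>B\<close>\<close>

locale B_regular =
  fixes n :: nat and A b :: "real \<Rightarrow> real"
  assumes n_pos: "n \<ge> 1"
    and B_eq: "\<And>t. t \<ge> 0 \<Longrightarrow> B_fun n A t = ereal (b t)"
    and b_0: "b 0 = 0"
    and b_cont: "continuous_on {0<..} b"
    and quotient_strict_mono: "strict_mono_on {0<..} (\<lambda>t. b t / t ^ n)"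
    and quotient_tendsto_0: "((\<lambda>t. b t / t ^ n) \<longlongrightarrow> 0) (at_right 0)"
begin

lemma quotient_less: "0 < x \<Longrightarrow> x < y \<Longrightarrow> b x / x ^ n < b y / y ^ n"
  using quotient_strict_mono by (auto simp: strict_mono_on_def)

lemma quotient_le: "0 < x \<Longrightarrow> x \<le> y \<Longrightarrow> b x / x ^ n \<le> b y / y ^ n"
  using quotient_less by (cases "x = y") (auto intro: less_imp_le)

lemma quotient_pos:
  assumes "t > 0"
  shows "b t / t ^ n > 0"
proof -
  have "0 \<le> b (t/2) / (t/2) ^ n"
  proof (rule tendsto_upperbound[OF quotient_tendsto_0])
    show "\<forall>\<^sub>F x in at_right 0. b x / x ^ n \<le> b (t/2) / (t/2) ^ n"
      using assms unfolding eventually_at_right_field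
      by (intro exI[of _ "t/2"]) (auto intro!: quotient_le)
  qed simp
  also have "\<dots> < b t / t ^ n"
    using assms by (intro quotient_less) auto
  finally show ?thesis .
qed

lemma b_pos: "t > 0 \<Longrightarrow> b t > 0"
  using quotient_pos[of t] by (simp add: zero_less_divide_iff)

lemma b_nonneg: "t \<ge> 0 \<Longrightarrow> b t \<ge> 0"
  using b_pos b_0 by (cases "t = 0") (auto intro: less_imp_le)

lemma b_less:
  assumes "0 \<le> x" "x < y"
  shows "b x < b y"
proof (cases "x = 0")
  case True
  then show ?thesis using b_0 b_pos[of y] assms by simp
next
  case False
  then have x: "x > 0" using assms by auto
  have "b x = x ^ n * (b x / x ^ n)" using x by simp
  also have "\<dots> < y ^ n * (b y / y ^ n)"
    using x assms quotient_less[of x y] quotient_pos[of x] n_pos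
    by (intro mult_strict_mono power_strict_mono) auto
  also have "\<dots> = b y" using x assms by simp
  finally show ?thesis .
qed

lemma b_le_iff: "0 \<le> x \<Longrightarrow> 0 \<le> y \<Longrightarrow> b x \<le> b y \<longleftrightarrow> x \<le> y"
  using b_less by (metis linorder_not_le order_le_less)

lemma B_inv_b: "x \<ge> 0 \<Longrightarrow> B_inv n A (b x) = x"
proof -
  assume "x \<ge> 0"
  then have "{t. 0 \<le> t \<and> B_fun n A t \<le> ereal (b x)} = {0..x}"
    by (auto simp: B_eq b_le_iff)
  with \<open>x \<ge> 0\<close> show ?thesis by (simp add: B_inv_def)
qed

lemma b_surj:
  assumes "u > 0"
  obtains x where "x > 0" "b x = u"
proof -
  obtain e where e: "e > 0" "\<And>t. 0 < t \<Longrightarrow> t < e \<Longrightarrow> b t / t ^ n < u"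
    using order_tendstoD(2)[OF quotient_tendsto_0 assms]
    unfolding eventually_at_right_field by auto
  define a where "a = min (e/2) 1"
  have a: "0 < a" "a < e" "a \<le> 1" using e by (auto simp: a_def)
  have "b a = a ^ n * (b a / a ^ n)" using a by simp
  also have "\<dots> \<le> b a / a ^ n"
    using a quotient_pos[of a] by (intro mult_left_le_one_le) (auto simp: power_le_one)
  also have "\<dots> < u" using e(2)[OF a(1,2)] .
  finally have ba: "b a < u" .
  define K where "K = max 1 (u / b 1) + 1"
  have b1: "b 1 > 0" using b_pos by simp
  have K: "K > 1" using b1 by (simp add: K_def)
  have "u < K * b 1"
    using b1 by (auto simp: K_def field_simps max_def)
  also have "K * b 1 \<le> K ^ n * (b K / K ^ n)"
  proof (intro mult_mono)
    show "K \<le> K ^ n" using K n_pos by (metis less_imp_le power_increasing power_one_right)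
    show "b 1 \<le> b K / K ^ n" using quotient_le[of 1 K] K by simp
  qed (use K b1 quotient_pos[of K] in auto)
  also have "\<dots> = b K" using K by simp
  finally have bK: "u < b K" .
  have "continuous_on {a..K} b"
    by (rule continuous_on_subset[OF b_cont]) (use a in auto)
  with IVT'[of b a u K] ba bK a K obtain x where "a \<le> x" "b x = u" by fastforce
  with a show ?thesis by (intro that[of x]) auto
qed

end

locale J_setting = B_regular +
  fixes \<phi> :: "real \<Rightarrow> real"
  assumes gauge: "gauge_function n \<phi>"
begin

lemma \<phi>_0: "\<phi> 0 = 0" and \<phi>_pos: "t > 0 \<Longrightarrow> \<phi> t > 0"
  and \<phi>_mono: "0 \<le> x \<Longrightarrow> x \<le> y \<Longrightarrow> \<phi> x \<le> \<phi> y"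
  and \<phi>_cont: "continuous_on {0..} \<phi>"
  using gauge unfolding gauge_function_def monotone_on_def by auto

lemma \<phi>_tendsto_0: "(\<phi> \<longlongrightarrow> 0) (at_right 0)"
  using \<phi>_cont \<phi>_0 unfolding continuous_on_def
  by (metis atLeast_iff greaterThan_iff less_imp_le subsetI tendsto_within_subset order_refl)

definition J_factor :: "real \<Rightarrow> real \<Rightarrow> real" where
  "J_factor r s = B_inv n A (r * \<phi> s / s ^ n)"

lemma J_factor_eqI:
  assumes "x \<ge> 0" "b x = r * \<phi> s / s ^ n"
  shows "J_factor r s = x"
  using B_inv_b[of x] assms by (simp add: J_factor_def)

lemma J_factor:
  assumes "r > 0" "s > 0"
  shows "J_factor r s > 0" "b (J_factor r s) = r * \<phi> s / s ^ n"
proof -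
  obtain x where "x > 0" "b x = r * \<phi> s / s ^ n"
    using b_surj assms \<phi>_pos[of s] by (metis divide_pos_pos mult_pos_pos zero_less_power)
  then show "J_factor r s > 0" "b (J_factor r s) = r * \<phi> s / s ^ n"
    using J_factor_eqI[of x] by auto
qed

lemma J_fun_0: "J_fun n A \<phi> r 0 = 0"
  by (simp add: J_fun_def)

lemma J_fun_eq: "s \<noteq> 0 \<Longrightarrow> J_fun n A \<phi> r s = s * J_factor r s"
  by (simp add: J_fun_def J_factor_def)

lemma J_fun_pos: "r > 0 \<Longrightarrow> s > 0 \<Longrightarrow> J_fun n A \<phi> r s > 0"
  using J_factor[of r s] by (simp add: J_fun_eq)

text \<open>With \<open>x = J\<^sub>r(s)/s\<close>, the relation defining \<open>J\<^sub>r\<close>, with \<open>B\<^sup>-\<^sup>1\<close> eliminated.\<close>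
lemma \<phi>_eq_J_fun:
  assumes "r > 0" "s > 0"
  defines "x \<equiv> J_factor r s"
  shows "r * \<phi> s = b x / x ^ n * J_fun n A \<phi> r s ^ n"
  using J_factor[OF assms(1,2)] assms(2)
  by (simp add: x_def J_fun_eq field_simps)

lemma J_fun_eqI:
  assumes "s > 0" "y > 0" "r * \<phi> s = b (y / s) / (y / s) ^ n * y ^ n"
  shows "J_fun n A \<phi> r s = y"
proof -
  have "b (y / s) = r * \<phi> s / s ^ n" using assms by (simp add: field_simps)
  then show ?thesis using J_factor_eqI[of "y / s"] assms by (simp add: J_fun_eq)
qed

lemma J_fun_strict_mono:
  assumes r: "r > 0"
  shows "strict_mono_on {0..} (J_fun n A \<phi> r)"
proof (rule strict_mono_onI)
  fix s1 s2 :: real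
  assume s: "s1 \<in> {0..}" "s2 \<in> {0..}" "s1 < s2"
  show "J_fun n A \<phi> r s1 < J_fun n A \<phi> r s2"
  proof (cases "s1 = 0")
    case True
    then show ?thesis using J_fun_pos[OF r, of s2] s by (simp add: J_fun_0)
  next
    case False
    with s have s1: "s1 > 0" and s2: "s2 > 0" by auto
    define x1 x2 where "x1 = J_factor r s1" and "x2 = J_factor r s2"
    have x1: "x1 > 0" "b x1 = r * \<phi> s1 / s1 ^ n" and x2: "x2 > 0" "b x2 = r * \<phi> s2 / s2 ^ n"
      using J_factor[OF r s1] J_factor[OF r s2] by (auto simp: x1_def x2_def)
    show ?thesis
    proof (rule ccontr)
      assume "\<not> ?thesis"
      then have J21: "J_fun n A \<phi> r s2 \<le> J_fun n A \<phi> r s1" by simp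
      then have "s2 * x2 \<le> s1 * x1" using s1 s2 by (simp add: J_fun_eq x1_def x2_def)
      also have "s1 * x1 < s2 * x1" using s x1 by simp
      finally have "x2 < x1" using s2 by simp
      then have q: "b x2 / x2 ^ n < b x1 / x1 ^ n" by (rule quotient_less[OF x2(1)])
      have "r * \<phi> s2 = b x2 / x2 ^ n * J_fun n A \<phi> r s2 ^ n"
        using \<phi>_eq_J_fun[OF r s2] by (simp add: x2_def)
      also have "\<dots> < b x1 / x1 ^ n * J_fun n A \<phi> r s1 ^ n"
        using q J21 J_fun_pos[OF r s2] quotient_pos[OF x2(1)]
        by (intro mult_less_le_imp_less power_mono) auto
      also have "\<dots> = r * \<phi> s1"
        using \<phi>_eq_J_fun[OF r s1] by (simp add: x1_def)
      finally have "\<phi> s2 < \<phi> s1" using r by simp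
      with \<phi>_mono[of s1 s2] s1 s show False by simp
    qed
  qed
qed

lemma J_fun_surj:
  assumes r: "r > 0" and y: "y > 0"
  obtains s where "s > 0" "J_fun n A \<phi> r s = y"
proof -
  define g where "g s = r * \<phi> s - b (y / s) / (y / s) ^ n * y ^ n" for s
  have "\<forall>\<^sub>F s in at_right 0. \<phi> s < b y / r"
    by (rule order_tendstoD(2)[OF \<phi>_tendsto_0]) (use b_pos[OF y] r in simp)
  then obtain e where e: "e > 0" "\<And>s. 0 < s \<Longrightarrow> s < e \<Longrightarrow> \<phi> s < b y / r"
    unfolding eventually_at_right_field by auto
  define sa where "sa = min (e/2) 1"
  have sa: "0 < sa" "sa < e" "sa \<le> 1" using e by (auto simp: sa_def)
  have "b y = b y / y ^ n * y ^ n" using y by simp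
  also have "\<dots> \<le> b (y / sa) / (y / sa) ^ n * y ^ n"
    using sa y by (intro mult_right_mono quotient_le) (auto simp: field_simps)
  moreover have "r * \<phi> sa < b y" using e(2)[OF sa(1,2)] r by (simp add: field_simps)
  ultimately have ga: "g sa \<le> 0" by (simp add: g_def)
  obtain d where d: "d > 0" "\<And>x. 0 < x \<Longrightarrow> x < d \<Longrightarrow> b x / x ^ n < r * \<phi> 1 / y ^ n"
    using order_tendstoD(2)[OF quotient_tendsto_0, of "r * \<phi> 1 / y ^ n"] r y \<phi>_pos[of 1]
    unfolding eventually_at_right_field by auto
  define sb where "sb = max 2 (2 * y / d)"
  have sb: "sb \<ge> 2" "y / sb < d"
    using d y by (auto simp: sb_def field_simps max_def)
  have "b (y / sb) / (y / sb) ^ n * y ^ n \<le> r * \<phi> 1"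
    using d(2)[of "y / sb"] sb y by (simp add: field_simps)
  also have "\<dots> \<le> r * \<phi> sb" using \<phi>_mono[of 1 sb] sb r by simp
  finally have gb: "g sb \<ge> 0" by (simp add: g_def)
  have "continuous_on {sa..sb} g"
    unfolding g_def
  proof (intro continuous_intros)
    show "continuous_on {sa..sb} \<phi>" by (rule continuous_on_subset[OF \<phi>_cont]) (use sa in auto)
    show "continuous_on {sa..sb} (\<lambda>s. b (y / s))"
    proof (rule continuous_on_compose2[OF b_cont])
      show "continuous_on {sa..sb} (\<lambda>s. y / s)" using sa by (intro continuous_intros) auto
    qed (use sa y in auto)
  qed (use sa y in auto)
  with IVT'[of g sa 0 sb] ga gb sa sb obtain s where s: "sa \<le> s" "g s = 0" by fastforce
  with sa y J_fun_eqI[of s y r] show ?thesis by (intro that[of s]) (auto simp: g_def)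
qed

lemma J_fun_bij: "r > 0 \<Longrightarrow> bij_betw (J_fun n A \<phi> r) {0..} {0..}"
proof (rule bij_betw_imageI)
  assume r: "r > 0"
  show "inj_on (J_fun n A \<phi> r) {0..}"
    by (rule strict_mono_on_imp_inj_on[OF J_fun_strict_mono[OF r]])
  show "J_fun n A \<phi> r ` {0..} = {0..}"
  proof (intro equalityI image_subsetI subsetI)
    fix s :: real assume "s \<in> {0..}"
    then show "J_fun n A \<phi> r s \<in> {0..}"
      using J_fun_pos[OF r, of s] by (cases "s = 0") (auto simp: J_fun_0)
  next
    fix y :: real assume y: "y \<in> {0..}"
    show "y \<in> J_fun n A \<phi> r ` {0..}"
    proof (cases "y = 0")
      case True
      then have "y = J_fun n A \<phi> r 0" by (simp add: J_fun_0)
      then show ?thesis by (intro image_eqI) auto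
    next
      case False
      with y obtain s where "s > 0" "y = J_fun n A \<phi> r s"
        using J_fun_surj[OF r, of y] by (metis atLeast_iff order_neq_le_trans)
      then show ?thesis by (intro image_eqI) auto
    qed
  qed
qed

lemma J_inv:
  assumes "r > 0" "y \<ge> 0"
  shows "J_inv n A \<phi> r y \<ge> 0" "J_fun n A \<phi> r (J_inv n A \<phi> r y) = y"
proof -
  have bij: "bij_betw (J_fun n A \<phi> r) {0..} {0..}" by (rule J_fun_bij[OF assms(1)])
  then have "J_inv n A \<phi> r y \<in> {0..}"
    unfolding J_inv_def using assms(2) by (intro bij_betw_apply[OF bij_betw_the_inv_into]) auto
  then show "J_inv n A \<phi> r y \<ge> 0" by simp
  show "J_fun n A \<phi> r (J_inv n A \<phi> r y) = y"
    unfolding J_inv_def using assms(2) by (intro f_the_inv_into_f_bij_betw[OF bij]) auto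
qed

lemma J_fun_mono_r:
  assumes "0 < r1" "r1 \<le> r2" "s \<ge> 0"
  shows "J_fun n A \<phi> r1 s \<le> J_fun n A \<phi> r2 s"
proof (cases "s = 0")
  case False
  with assms have s: "s > 0" by simp
  have "b (J_factor r1 s) \<le> b (J_factor r2 s)"
    using J_factor[of r1 s] J_factor[of r2 s] assms s \<phi>_pos[of s]
    by (simp add: divide_right_mono mult_right_mono)
  moreover have "J_factor r1 s \<ge> 0" "J_factor r2 s \<ge> 0"
    using J_factor[of r1 s] J_factor[of r2 s] assms s by auto
  ultimately have "J_factor r1 s \<le> J_factor r2 s" using b_le_iff by blast
  with s show ?thesis by (simp add: J_fun_eq)
qed (simp add: J_fun_0)

lemma J_inv_antimono: "s > 0 \<Longrightarrow> antimono_on {0<..} (\<lambda>r. J_inv n A \<phi> r s)"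
proof (rule monotone_onI)
  fix r1 r2 :: real
  assume s: "s > 0" and r: "r1 \<in> {0<..}" "r2 \<in> {0<..}" "r1 \<le> r2"
  define s1 s2 where "s1 = J_inv n A \<phi> r1 s" and "s2 = J_inv n A \<phi> r2 s"
  have s1: "s1 \<ge> 0" "J_fun n A \<phi> r1 s1 = s" and s2: "s2 \<ge> 0" "J_fun n A \<phi> r2 s2 = s"
    using J_inv[of r1 s] J_inv[of r2 s] r s by (auto simp: s1_def s2_def)
  have "J_fun n A \<phi> r2 s2 \<le> J_fun n A \<phi> r2 s1"
    using J_fun_mono_r[of r1 r2 s1] r s1 s2 by simp
  then have "s2 \<le> s1"
    using strict_mono_on_less_eq[OF J_fun_strict_mono, of r2 s2 s1] s1 s2 r by simp
  then show "J_inv n A \<phi> r2 s \<le> J_inv n A \<phi> r1 s" by (simp add: s1_def s2_def)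
qed

lemma \<phi>_J_inv_le:
  assumes s: "s > 0" and t: "t > 0" and r: "r > 0"
  shows "\<phi> (J_inv n A \<phi> r (s * t)) \<le> \<phi> t + t ^ n / r * b s"
proof -
  define \<sigma> where "\<sigma> = J_inv n A \<phi> r (s * t)"
  have \<sigma>: "\<sigma> \<ge> 0" "J_fun n A \<phi> r \<sigma> = s * t"
    using J_inv[of r "s * t"] r s t by (auto simp: \<sigma>_def)
  show ?thesis
  proof (cases "\<sigma> \<le> t")
    case True
    have "0 \<le> t ^ n / r * b s" using b_nonneg[of s] s t r by simp
    moreover have "\<phi> \<sigma> \<le> \<phi> t" using \<phi>_mono[of \<sigma> t] \<sigma> True by simp
    ultimately show ?thesis unfolding \<sigma>_def by linarith
  next
    case False
    with t have \<sigma>_pos: "\<sigma> > 0" by simp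
    define x where "x = J_factor r \<sigma>"
    have x: "x > 0" "\<sigma> * x = s * t"
      using J_factor(1)[OF r \<sigma>_pos] \<sigma> \<sigma>_pos by (auto simp: x_def J_fun_eq)
    have "x \<le> s"
    proof (rule ccontr)
      assume "\<not> x \<le> s"
      then have "s * t < x * \<sigma>" using False s t by (intro mult_strict_mono) auto
      with x(2) show False by (simp add: mult.commute)
    qed
    have "r * \<phi> \<sigma> = b x / x ^ n * (s * t) ^ n"
      using \<phi>_eq_J_fun[OF r \<sigma>_pos] \<sigma> by (simp add: x_def)
    also have "\<dots> \<le> b s / s ^ n * (s * t) ^ n"
      using quotient_le[OF x(1) \<open>x \<le> s\<close>] s t by (intro mult_right_mono) auto
    also have "\<dots> = t ^ n * b s" using s by (simp add: power_mult_distrib)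
    finally have "\<phi> \<sigma> \<le> t ^ n / r * b s" using r by (simp add: field_simps)
    moreover have "\<phi> t > 0" by (rule \<phi>_pos[OF t])
    ultimately show ?thesis unfolding \<sigma>_def by linarith
  qed
qed

end

section \<open>Regularity of \<open>B\<close>\<close>

lemma B_regular_dim1:
  assumes "young_function A" "cond_C2 A" "cond_C3 1 A"
  shows "B_regular 1 A A"
proof -
  have convex: "convex_on {0..} A" and A_0: "A 0 = 0"
    using assms(1) by (auto simp: young_function_def)
  have "filterlim (\<lambda>t. t / A t) at_top (at_right 0)"
    using assms(3) by (simp add: cond_C3_def)
  from tendsto_inverse_0_at_top[OF this]
  have lim: "((\<lambda>t. A t / t) \<longlongrightarrow> 0) (at_right 0)" by simp
  show ?thesis
  proof
    show "strict_mono_on {0<..} (\<lambda>t. A t / t ^ 1)"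
      using convex_on_quotient_strict_mono[OF convex A_0] assms(2) lim
      by (auto simp: strict_mono_on_def cond_C2_def)
    show "continuous_on {0<..} A"
      by (rule convex_on_continuous) (auto intro: convex_on_subset[OF convex])
  qed (use A_0 lim in \<open>simp_all add: B_fun_def\<close>)
qed

locale young_highdim =
  fixes n :: nat and A :: "real \<Rightarrow> real"
  assumes dim: "n \<ge> 2" and young: "young_function A"
    and C1: "cond_C1 n A" and C2: "cond_C2 A" and C3: "cond_C3 n A"
begin

definition p :: real where "p = 1 / (real n - 1)"

lemma p_pos: "p > 0"
  using dim by (simp add: p_def)

lemma p_times: "p * (real n - 1) = 1"
  using dim by (simp add: p_def)

lemma nprime_eq: "nprime n = 1 + p"
  using dim by (simp add: nprime_def p_def field_simps)

lemma A_convex: "convex_on {0..} A" and A_0: "A 0 = 0" and A_nonneg: "t \<ge> 0 \<Longrightarrow> A t \<ge> 0"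
  using young by (auto simp: young_function_def)

lemma A_pos: "t > 0 \<Longrightarrow> A t > 0"
  using C2 by (simp add: cond_C2_def)

lemma A_quotient_pos: "t > 0 \<Longrightarrow> A t / t > 0"
  using A_pos by simp

lemma A_quotient_mono: "0 < x \<Longrightarrow> x \<le> y \<Longrightarrow> A x / x \<le> A y / y"
  by (rule convex_on_quotient_mono[OF A_convex A_0])

lemma C1_integral: "(\<integral>\<^sup>+t. indicator {1..} t * ennreal ((t / A t) powr p) \<partial>lborel) < \<infinity>"
  using C1 dim by (simp add: cond_C1_def p_def)

lemma C3_integral: "(\<integral>\<^sup>+t. indicator {0<..1} t * ennreal ((t / A t) powr p) \<partial>lborel) = \<infinity>"
  using C3 dim by (simp add: cond_C3_def p_def)

lemma A_quotient_small:
  assumes "c > 0"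
  obtains t where "t > 0" "A t / t < c"
proof -
  have "\<exists>t>0. A t / t < c"
  proof (rule ccontr)
    assume "\<not> ?thesis"
    then have ge: "c \<le> A t / t" if "t > 0" for t
      using that by (meson not_le)
    have "(\<integral>\<^sup>+t. indicator {0<..1} t * ennreal ((t / A t) powr p) \<partial>lborel)
       \<le> (\<integral>\<^sup>+t. ennreal ((1 / c) powr p) * indicator {0<..1::real} t \<partial>lborel)"
    proof (intro nn_integral_mono)
      fix t :: real
      show "indicator {0<..1} t * ennreal ((t / A t) powr p) \<le> ennreal ((1 / c) powr p) * indicator {0<..1} t"
      proof (cases "t \<in> {0<..1}")
        case True
        then have t: "t > 0" by simp
        have "t / A t \<le> 1 / c" using ge[OF t] A_pos[OF t] assms t by (simp add: field_simps)
        then have "(t / A t) powr p \<le> (1 / c) powr p"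
          using t A_pos[OF t] p_pos by (intro powr_mono2) auto
        with True show ?thesis by (simp add: ennreal_leI)
      qed simp
    qed
    also have "\<dots> < \<infinity>"
      by (simp add: nn_integral_cmult_indicator ennreal_mult_less_top)
    finally show False using C3_integral by simp
  qed
  with that show ?thesis by blast
qed

lemma A_quotient_eventually_large:
  obtains T where "T \<ge> 1" "\<And>\<tau>. \<tau> \<ge> T \<Longrightarrow> M < A \<tau> / \<tau>"
proof -
  have "\<exists>T\<ge>1. M < A T / T"
  proof (rule ccontr)
    assume "\<not> ?thesis"
    then have le: "A t / t \<le> M" if "t \<ge> 1" for t
      using that by (meson not_le)
    have M: "M > 0" using le[of 1] A_pos[of 1] by simp
    have "(\<infinity>::ennreal) = (\<integral>\<^sup>+t. ennreal ((1 / M) powr p) * indicator {1::real..} t \<partial>lborel)"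
      using M by (simp add: nn_integral_cmult_indicator emeasure_lborel_Ici ennreal_mult_top)
    also have "\<dots> \<le> (\<integral>\<^sup>+t. indicator {1..} t * ennreal ((t / A t) powr p) \<partial>lborel)"
    proof (intro nn_integral_mono)
      fix t :: real
      show "ennreal ((1 / M) powr p) * indicator {1..} t \<le> indicator {1..} t * ennreal ((t / A t) powr p)"
      proof (cases "t \<ge> 1")
        case True
        have "1 / M \<le> t / A t" using le[OF True] A_pos[of t] M True by (simp add: field_simps)
        then have "(1 / M) powr p \<le> (t / A t) powr p"
          using M p_pos by (intro powr_mono2) auto
        with True show ?thesis by (simp add: ennreal_leI)
      qed simp
    qed
    finally show False using C1_integral by simp
  qed
  then obtain T where T: "T \<ge> 1" "M < A T / T" by blast
  then have "M < A \<tau> / \<tau>" if "\<tau> \<ge> T" for \<tau>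
    using A_quotient_mono[of T \<tau>] that by simp
  with T that show ?thesis by blast
qed

definition A_conj :: "real \<Rightarrow> real" where
  "A_conj s = real_of_ereal (young_conj (\<lambda>\<tau>. ereal (A \<tau>)) s)"

lemma young_conj_A: "young_conj (\<lambda>\<tau>. ereal (A \<tau>)) s = ereal (A_conj s)"
proof -
  obtain T where T: "T \<ge> 1" "\<And>\<tau>. \<tau> \<ge> T \<Longrightarrow> \<bar>s\<bar> < A \<tau> / \<tau>"
    using A_quotient_eventually_large by blast
  have "\<tau> * s - A \<tau> \<le> T * \<bar>s\<bar>" if "\<tau> \<ge> 0" for \<tau>
  proof (cases "\<tau> \<ge> T")
    case True
    with T have "\<tau> > 0" by simp
    have "\<tau> * s \<le> \<tau> * \<bar>s\<bar>" using \<open>\<tau> > 0\<close> by (intro mult_left_mono) auto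
    also have "\<dots> < A \<tau>" using T(2)[OF True] \<open>\<tau> > 0\<close> by (simp add: field_simps)
    finally have "\<tau> * s < A \<tau>" .
    moreover have "0 \<le> T * \<bar>s\<bar>" using T by simp
    ultimately show ?thesis by linarith
  next
    case False
    have "\<tau> * s \<le> \<tau> * \<bar>s\<bar>" using that by (intro mult_left_mono) auto
    also have "\<dots> \<le> T * \<bar>s\<bar>" using False by (intro mult_right_mono) auto
    finally show ?thesis using A_nonneg[OF that] by simp
  qed
  then have "young_conj (\<lambda>\<tau>. ereal (A \<tau>)) s \<le> ereal (T * \<bar>s\<bar>)"
    unfolding young_conj_def by (intro SUP_least) auto
  moreover have "ereal 0 \<le> young_conj (\<lambda>\<tau>. ereal (A \<tau>)) s"
    unfolding young_conj_def using A_0 by (intro SUP_upper2[of 0]) auto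
  ultimately show ?thesis
    unfolding A_conj_def by (intro ereal_real' [symmetric]) auto
qed

lemma A_conj_ge: "\<tau> \<ge> 0 \<Longrightarrow> \<tau> * s - A \<tau> \<le> A_conj s"
proof -
  assume "\<tau> \<ge> 0"
  then have "ereal (\<tau> * s - A \<tau>) \<le> young_conj (\<lambda>\<tau>. ereal (A \<tau>)) s"
    unfolding young_conj_def by (intro SUP_upper2[of \<tau>]) auto
  then show ?thesis by (simp add: young_conj_A)
qed

lemma A_conj_least: "(\<And>\<tau>. \<tau> \<ge> 0 \<Longrightarrow> \<tau> * s - A \<tau> \<le> c) \<Longrightarrow> A_conj s \<le> c"
proof -
  assume "\<And>\<tau>. \<tau> \<ge> 0 \<Longrightarrow> \<tau> * s - A \<tau> \<le> c"
  then have "young_conj (\<lambda>\<tau>. ereal (A \<tau>)) s \<le> ereal c"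
    unfolding young_conj_def by (intro SUP_least) auto
  then show ?thesis by (simp add: young_conj_A)
qed

lemma A_conj_nonneg: "A_conj s \<ge> 0"
  using A_conj_ge[of 0 s] A_0 by simp

lemma A_conj_mono: "s1 \<le> s2 \<Longrightarrow> A_conj s1 \<le> A_conj s2"
proof (rule A_conj_least)
  fix \<tau> :: real assume "s1 \<le> s2" "\<tau> \<ge> 0"
  then have "\<tau> * s1 \<le> \<tau> * s2" by (intro mult_left_mono)
  with A_conj_ge[OF \<open>\<tau> \<ge> 0\<close>, of s2] show "\<tau> * s1 - A \<tau> \<le> A_conj s2" by simp
qed

lemma borel_measurable_A_conj[measurable]: "A_conj \<in> borel_measurable borel"
  by (rule borel_measurable_mono) (auto simp: mono_def intro: A_conj_mono)

lemma A_conj_quotient_mono: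
  assumes "0 < x" "x \<le> y"
  shows "A_conj x / x \<le> A_conj y / y"
proof -
  have "A_conj x \<le> x / y * A_conj y"
  proof (rule A_conj_least)
    fix \<tau> :: real assume \<tau>: "\<tau> \<ge> 0"
    have "x / y * A \<tau> \<le> A \<tau>"
      using A_nonneg[OF \<tau>] assms by (intro mult_left_le_one_le) auto
    then have "\<tau> * x - A \<tau> \<le> x / y * (\<tau> * y - A \<tau>)"
      using assms by (simp add: algebra_simps)
    also have "\<dots> \<le> x / y * A_conj y" using A_conj_ge[OF \<tau>] assms by (intro mult_left_mono) auto
    finally show "\<tau> * x - A \<tau> \<le> x / y * A_conj y" .
  qed
  then show ?thesis using assms by (simp add: field_simps)
qed

lemma A_conj_pos:
  assumes "s > 0"
  shows "A_conj s > 0"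
proof -
  obtain \<tau> where "\<tau> > 0" "A \<tau> / \<tau> < s" using A_quotient_small[OF assms] .
  then have "A \<tau> < \<tau> * s" by (simp add: field_simps)
  with A_conj_ge[of \<tau> s] \<open>\<tau> > 0\<close> show ?thesis by simp
qed

lemma A_conj_le_linear:
  assumes \<tau>0: "\<tau>0 > 0" and s: "0 \<le> s" "s < A \<tau>0 / \<tau>0"
  shows "A_conj s \<le> \<tau>0 * s"
proof (rule A_conj_least)
  fix \<tau> :: real assume \<tau>: "\<tau> \<ge> 0"
  show "\<tau> * s - A \<tau> \<le> \<tau>0 * s"
  proof (cases "\<tau> \<ge> \<tau>0")
    case True
    with \<tau>0 have "s < A \<tau> / \<tau>" using A_quotient_mono[OF \<tau>0 True] s by simp
    then have "\<tau> * s < A \<tau>" using True \<tau>0 by (simp add: field_simps)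
    moreover have "0 \<le> \<tau>0 * s" using \<tau>0 s by simp
    ultimately show ?thesis by linarith
  next
    case False
    then have "\<tau> * s \<le> \<tau>0 * s" using s by (intro mult_right_mono) auto
    with A_nonneg[OF \<tau>] show ?thesis by simp
  qed
qed

subsection \<open>The tail integral \<open>F\<close>\<close>

text \<open>Since \<open>-2 - p = -1 - n'\<close>, \<open>tail \<tau>\<close> is the integral in the definition of \<open>E_fun\<close>.\<close>
definition dens :: "real \<Rightarrow> ennreal" where
  "dens s = ennreal (A_conj s * s powr (-2 - p))"

definition tail :: "real \<Rightarrow> ennreal" where
  "tail \<tau> = (\<integral>\<^sup>+s. indicator {\<tau><..} s * dens s \<partial>lborel)"

lemma borel_measurable_dens[measurable]: "dens \<in> borel_measurable borel"
  unfolding dens_def by measurable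

lemma tail_split:
  assumes "a \<le> b"
  shows "tail a = (\<integral>\<^sup>+s. indicator {a<..b} s * dens s \<partial>lborel) + tail b"
proof -
  have "tail a = (\<integral>\<^sup>+s. indicator {a<..b} s * dens s + indicator {b<..} s * dens s \<partial>lborel)"
    unfolding tail_def using assms by (intro nn_integral_cong) (auto simp: indicator_def)
  also have "\<dots> = (\<integral>\<^sup>+s. indicator {a<..b} s * dens s \<partial>lborel) + tail b"
    unfolding tail_def by (rule nn_integral_add) auto
  finally show ?thesis .
qed

lemma tail_antimono: "a \<le> b \<Longrightarrow> tail b \<le> tail a"
  using tail_split[of a b] by simp

lemma dens_ge_const:
  assumes "0 < a" "a < s" "s \<le> b"
  shows "ennreal (A_conj a * b powr (-2 - p)) \<le> dens s"
  unfolding dens_def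
proof (intro ennreal_leI mult_mono)
  show "A_conj a \<le> A_conj s" using assms by (intro A_conj_mono) auto
  show "b powr (-2 - p) \<le> s powr (-2 - p)"
    using assms p_pos by (intro powr_mono2') auto
qed (use A_conj_nonneg in auto)

lemma tail_gap:
  assumes "0 < a" "a < b"
  shows "tail b + ennreal ((b - a) * (A_conj a * b powr (-2 - p))) \<le> tail a"
proof -
  have "ennreal ((b - a) * (A_conj a * b powr (-2 - p)))
      = (\<integral>\<^sup>+s. ennreal (A_conj a * b powr (-2 - p)) * indicator {a<..b} s \<partial>lborel)"
  proof -
    have C: "A_conj a * b powr (-2 - p) \<ge> 0" using A_conj_nonneg by simp
    have "(\<integral>\<^sup>+s. ennreal (A_conj a * b powr (-2 - p)) * indicator {a<..b} s \<partial>lborel)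
        = ennreal (A_conj a * b powr (-2 - p)) * emeasure lborel {a<..b}"
      by (rule nn_integral_cmult_indicator) simp
    also have "\<dots> = ennreal (A_conj a * b powr (-2 - p)) * ennreal (b - a)" using assms by simp
    also have "\<dots> = ennreal ((b - a) * (A_conj a * b powr (-2 - p)))"
      using C assms by (simp add: ennreal_mult[symmetric] mult.commute)
    finally show ?thesis by simp
  qed
  also have "\<dots> \<le> (\<integral>\<^sup>+s. indicator {a<..b} s * dens s \<partial>lborel)"
    using dens_ge_const[OF assms(1)] by (intro nn_integral_mono) (auto simp: indicator_def)
  finally show ?thesis using tail_split[of a b] assms by (simp add: add.commute add_left_mono)
qed

lemma tail_ge_A_conj:
  assumes t: "\<tau> > 0"
  shows "ennreal (A_conj \<tau> / \<tau> * (\<tau> powr (-p) / p)) \<le> tail \<tau>"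
proof -
  have "ennreal (A_conj \<tau> / \<tau> * (\<tau> powr (-p) / p)) =
      ennreal (A_conj \<tau> / \<tau>) * (\<integral>\<^sup>+u. indicator {\<tau><..} u * ennreal (u powr (-1 - p)) \<partial>lborel)"
    using t p_pos A_conj_nonneg[of \<tau>] by (simp add: nn_integral_powr_Ioi ennreal_mult[symmetric])
  also have "\<dots> = (\<integral>\<^sup>+u. indicator {\<tau><..} u * ennreal (A_conj \<tau> / \<tau> * u powr (-1 - p)) \<partial>lborel)"
    using t A_conj_nonneg[of \<tau>]
    by (subst nn_integral_cmult[symmetric]) (auto intro!: nn_integral_cong simp: ennreal_mult[symmetric] indicator_def)
  also have "\<dots> \<le> tail \<tau>"
    unfolding tail_def dens_def
  proof (intro nn_integral_mono)
    fix u :: real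
    show "indicator {\<tau><..} u * ennreal (A_conj \<tau> / \<tau> * u powr (-1 - p)) \<le> indicator {\<tau><..} u * ennreal (A_conj u * u powr (-2 - p))"
    proof (cases "\<tau> < u")
      case True
      then have u: "u > 0" using t by simp
      have "A_conj \<tau> / \<tau> \<le> A_conj u / u" using t True by (intro A_conj_quotient_mono) auto
      then have "A_conj \<tau> / \<tau> * u powr (-1 - p) \<le> A_conj u / u * u powr (-1 - p)"
        by (intro mult_right_mono) auto
      also have "\<dots> = A_conj u * u powr (-2 - p)"
        using u by (simp add: powr_diff powr_minus field_simps powr_add power2_eq_square)
      finally show ?thesis using True by (simp add: ennreal_leI)
    qed simp
  qed
  finally show ?thesis .
qed

text \<open>\<open>A t / t\<close>, extended by \<open>0\<close> to \<open>t \<le> 0\<close>, where \<open>A\<close> is unconstrained; being monotone,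
  the extension is Borel measurable.\<close>
definition A_quot :: "real \<Rightarrow> real" where
  "A_quot t = (if t \<le> 0 then 0 else A t / t)"

lemma mono_A_quot: "mono A_quot"
proof (rule monoI)
  fix x y :: real assume "x \<le> y"
  then show "A_quot x \<le> A_quot y"
    using A_quotient_mono[of x y] A_quotient_pos[of y] by (auto simp: A_quot_def less_imp_le)
qed

lemma borel_measurable_A_quot[measurable]: "A_quot \<in> borel_measurable borel"
  by (rule borel_measurable_mono[OF mono_A_quot])

lemma A_quot_eq: "t > 0 \<Longrightarrow> A_quot t = A t / t"
  by (simp add: A_quot_def)

lemma emeasure_sublevel_ge:
  assumes "1 < \<tau>" "A \<tau> / \<tau> \<le> u"
  shows "ennreal (\<tau> - 1) \<le> emeasure lborel {t\<in>{1..}. A_quot t \<le> u}"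
proof -
  have "{1..\<tau>} \<subseteq> {t\<in>{1..}. A_quot t \<le> u}"
  proof
    fix x assume x: "x \<in> {1..\<tau>}"
    then have "A x / x \<le> A \<tau> / \<tau>" by (intro A_quotient_mono) auto
    with assms x show "x \<in> {t\<in>{1..}. A_quot t \<le> u}" by (auto simp: A_quot_def)
  qed
  then have "emeasure lborel {1..\<tau>} \<le> emeasure lborel {t\<in>{1..}. A_quot t \<le> u}"
    by (intro emeasure_mono) measurable
  with assms show ?thesis by simp
qed

lemma A_conj_le_sublevel:
  assumes u: "u > 0"
  shows "ennreal (A_conj u) \<le> ennreal u * (1 + emeasure lborel {t\<in>{1..}. A_quot t \<le> u})"
proof (cases "emeasure lborel {t\<in>{1..}. A_quot t \<le> u}" rule: ennreal_cases)
  case (real m)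
  have "A_conj u \<le> u * (1 + m)"
  proof (rule A_conj_least)
    fix \<tau> :: real assume \<tau>: "\<tau> \<ge> 0"
    have "0 \<le> u * m" using u real by simp
    consider "\<tau> \<le> 1" | "1 < \<tau>" "A \<tau> / \<tau> \<le> u" | "1 < \<tau>" "u < A \<tau> / \<tau>" by linarith
    then show "\<tau> * u - A \<tau> \<le> u * (1 + m)"
    proof cases
      case 1
      then have "\<tau> * u \<le> 1 * u" using u by (intro mult_right_mono) auto
      with \<open>0 \<le> u * m\<close> A_nonneg[OF \<tau>] show ?thesis by (simp add: distrib_left)
    next
      case 2
      then have "\<tau> - 1 \<le> m" using emeasure_sublevel_ge[of \<tau> u] real by simp
      then have "\<tau> * u \<le> (1 + m) * u" using u by (intro mult_right_mono) auto
      with A_nonneg[OF \<tau>] show ?thesis by (simp add: mult.commute)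
    next
      case 3
      then have "\<tau> * u < A \<tau>" by (simp add: field_simps)
      with \<open>0 \<le> u * m\<close> u show ?thesis by (simp add: distrib_left)
    qed
  qed
  then have "ennreal (A_conj u) \<le> ennreal (u * (1 + m))" by (rule ennreal_leI)
  also have "\<dots> = ennreal u * (1 + ennreal m)" using u real by (simp add: ennreal_mult)
  finally show ?thesis using real by simp
next
  case top
  then show ?thesis using u by (simp add: ennreal_mult_top)
qed

lemma A_quot_powr: "t > 0 \<Longrightarrow> A_quot t powr (-p) = (t / A t) powr p"
  using A_pos[of t] by (simp add: A_quot_eq powr_minus inverse_powr[symmetric])

lemma nn_integral_A_quot_powr:
  assumes S: "S \<subseteq> {0<..}" "S \<in> sets borel" and c: "c > 0"
  shows "(\<integral>\<^sup>+t. indicator S t * ennreal ((c * A_quot t) powr (-p) / p) \<partial>lborel)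
       = ennreal (c powr (-p) / p) * (\<integral>\<^sup>+t. indicator S t * ennreal ((t / A t) powr p) \<partial>lborel)"
proof -
  have "(c * A_quot t) powr (-p) / p = c powr (-p) / p * A_quot t powr (-p)" if "t \<in> S" for t
    using S that c A_pos[of t] by (auto simp: A_quot_eq powr_mult)
  then have "(\<integral>\<^sup>+t. indicator S t * ennreal ((c * A_quot t) powr (-p) / p) \<partial>lborel)
      = (\<integral>\<^sup>+t. ennreal (c powr (-p) / p) * (indicator S t * ennreal (A_quot t powr (-p))) \<partial>lborel)"
    using p_pos by (intro nn_integral_cong) (auto simp: indicator_def ennreal_mult[symmetric])
  also have "\<dots> = ennreal (c powr (-p) / p) * (\<integral>\<^sup>+t. indicator S t * ennreal (A_quot t powr (-p)) \<partial>lborel)"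
  proof (intro nn_integral_cmult)
    have [measurable]: "S \<in> sets borel" by (rule S(2))
    show "(\<lambda>t. indicator S t * ennreal (A_quot t powr (-p))) \<in> borel_measurable lborel" by measurable
  qed
  also have "(\<integral>\<^sup>+t. indicator S t * ennreal (A_quot t powr (-p)) \<partial>lborel)
      = (\<integral>\<^sup>+t. indicator S t * ennreal ((t / A t) powr p) \<partial>lborel)"
    using S(1) A_quot_powr by (intro nn_integral_cong) (auto simp: indicator_def)
  finally show ?thesis .
qed

lemma C1_integral_A_quot: "(\<integral>\<^sup>+t. indicator {1..} t * ennreal (A_quot t powr (-p) / p) \<partial>lborel) < \<infinity>"
  using nn_integral_A_quot_powr[of "{1..}" 1] C1_integral by (simp add: ennreal_mult_less_top subset_eq)

lemma dens_le_sublevel: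
  assumes u: "u > 0"
  shows "dens u \<le> ennreal (u powr (-1 - p)) + ennreal (u powr (-1 - p)) * emeasure lborel {t\<in>{1..}. A_quot t \<le> u}"
proof -
  let ?m = "emeasure lborel {t\<in>{1..}. A_quot t \<le> u}"
  have "dens u = ennreal (A_conj u) * ennreal (u powr (-2 - p))"
    unfolding dens_def using A_conj_nonneg by (simp add: ennreal_mult)
  also have "\<dots> \<le> (ennreal u * (1 + ?m)) * ennreal (u powr (-2 - p))"
    by (intro mult_right_mono A_conj_le_sublevel[OF u]) auto
  also have "\<dots> = (ennreal u * ennreal (u powr (-2 - p))) * (1 + ?m)"
    by (simp add: ac_simps)
  also have "ennreal u * ennreal (u powr (-2 - p)) = ennreal (u powr (-1 - p))"
  proof -
    have "u * u powr (-2 - p) = u powr (-1 - p)"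
      using u by (simp add: powr_diff powr_minus field_simps power2_eq_square)
    then show ?thesis using u by (simp add: ennreal_mult[symmetric])
  qed
  also have "ennreal (u powr (-1 - p)) * (1 + ?m) = ennreal (u powr (-1 - p)) + ennreal (u powr (-1 - p)) * ?m"
    by (simp add: distrib_left)
  finally show ?thesis .
qed

lemma tail_finite:
  assumes t: "\<tau> > 0"
  shows "tail \<tau> < \<infinity>"
proof -
  let ?m = "\<lambda>u. emeasure lborel {t\<in>{1..}. A_quot t \<le> u}"
  have "tail \<tau> \<le> (\<integral>\<^sup>+u. indicator {\<tau><..} u * ennreal (u powr (-1 - p)) +
          indicator {0<..} u * ennreal (u powr (-1 - p)) * ?m u \<partial>lborel)"
    unfolding tail_def
  proof (rule nn_integral_mono)
    fix u :: real assume "u \<in> space lborel"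
    show "indicator {\<tau><..} u * dens u \<le> indicator {\<tau><..} u * ennreal (u powr (-1 - p)) +
          indicator {0<..} u * ennreal (u powr (-1 - p)) * ?m u"
    proof (cases "\<tau> < u")
      case True
      then show ?thesis using dens_le_sublevel[of u] t by (simp add: mult.assoc)
    qed simp
  qed
  also have "\<dots> = (\<integral>\<^sup>+u. indicator {\<tau><..} u * ennreal (u powr (-1 - p)) \<partial>lborel) +
          (\<integral>\<^sup>+u. indicator {0<..} u * ennreal (u powr (-1 - p)) * ?m u \<partial>lborel)"
    by (rule nn_integral_add) measurable
  also have "\<dots> = ennreal (\<tau> powr (-p) / p) +
      (\<integral>\<^sup>+t. indicator {1..} t * ennreal (A_quot t powr (-p) / p) \<partial>lborel)"
  proof -
    have "(\<integral>\<^sup>+u. indicator {0<..} u * ennreal (u powr (-1 - p)) * ?m u \<partial>lborel)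
       = (\<integral>\<^sup>+t. indicator {1..} t * ennreal (A_quot t powr (-p) / p) \<partial>lborel)"
      by (rule nn_integral_powr_emeasure_sublevel) (auto simp: A_quot_eq A_quotient_pos p_pos)
    then show ?thesis using nn_integral_powr_Ioi[OF t p_pos] by simp
  qed
  also have "\<dots> < \<infinity>" using C1_integral_A_quot by simp
  finally show ?thesis .
qed

lemma powr_emeasure_sublevel_le_dens:
  assumes u: "u > 0"
  shows "ennreal (u powr (-1 - p)) * emeasure lborel {t\<in>{0<..1}. 2 * A_quot t \<le> u} \<le> 2 * dens u"
proof -
  have "{t\<in>{0<..1}. 2 * A_quot t \<le> u} \<subseteq> {0<..2 * A_conj u / u}"
  proof
    fix t assume t: "t \<in> {t\<in>{0<..1}. 2 * A_quot t \<le> u}"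
    then have "t > 0" "2 * A t \<le> t * u" by (auto simp: A_quot_def field_simps)
    moreover have "t * u - A t \<le> A_conj u" using A_conj_ge[of t u] \<open>t > 0\<close> by simp
    ultimately show "t \<in> {0<..2 * A_conj u / u}" using u by (simp add: field_simps)
  qed
  then have "emeasure lborel {t\<in>{0<..1}. 2 * A_quot t \<le> u} \<le> ennreal (2 * A_conj u / u)"
    using emeasure_mono[of _ "{0<..2 * A_conj u / u}" lborel] u A_conj_nonneg by simp
  then have "ennreal (u powr (-1 - p)) * emeasure lborel {t\<in>{0<..1}. 2 * A_quot t \<le> u}
      \<le> ennreal (u powr (-1 - p)) * ennreal (2 * A_conj u / u)"
    by (rule mult_left_mono) simp
  also have "\<dots> = ennreal (u powr (-1 - p) * (2 * A_conj u / u))"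
    using u A_conj_nonneg[of u] by (subst ennreal_mult) auto
  also have "u powr (-1 - p) * (2 * A_conj u / u) = 2 * (A_conj u * u powr (-2 - p))"
    using u by (simp add: powr_diff powr_minus field_simps power2_eq_square)
  also have "ennreal \<dots> = 2 * dens u"
    using A_conj_nonneg by (simp add: dens_def ennreal_mult)
  finally show ?thesis .
qed

lemma nn_integral_dens_infinite: "(\<integral>\<^sup>+u. indicator {0<..} u * dens u \<partial>lborel) = \<infinity>"
proof -
  let ?S = "\<lambda>u. {t\<in>{0<..1}. 2 * A_quot t \<le> u}"
  have "(\<integral>\<^sup>+u. indicator {0<..} u * ennreal (u powr (-1 - p)) * emeasure lborel (?S u) \<partial>lborel)
      = (\<integral>\<^sup>+t. indicator {0<..1} t * ennreal ((2 * A_quot t) powr (-p) / p) \<partial>lborel)"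
    by (rule nn_integral_powr_emeasure_sublevel) (measurable, auto simp: A_quot_eq p_pos A_pos)
  also have "\<dots> = \<infinity>"
    using nn_integral_A_quot_powr[of "{0<..1}" 2] C3_integral p_pos by (simp add: subset_eq ennreal_mult_top)
  finally have "\<infinity> = (\<integral>\<^sup>+u. indicator {0<..} u * ennreal (u powr (-1 - p)) * emeasure lborel (?S u) \<partial>lborel)"
    by simp
  also have "\<dots> \<le> (\<integral>\<^sup>+u. 2 * (indicator {0<..} u * dens u) \<partial>lborel)"
  proof (intro nn_integral_mono)
    fix u :: real
    show "indicator {0<..} u * ennreal (u powr (-1 - p)) * emeasure lborel (?S u)
        \<le> 2 * (indicator {0<..} u * dens u)"
      using powr_emeasure_sublevel_le_dens[of u] by (cases "u > 0") simp_all
  qed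
  also have "\<dots> = 2 * (\<integral>\<^sup>+u. indicator {0<..} u * dens u \<partial>lborel)"
    by (rule nn_integral_cmult) measurable
  finally have "2 * (\<integral>\<^sup>+u. indicator {0<..} u * dens u \<partial>lborel) = \<infinity>"
    by (simp add: top_unique)
  then show ?thesis by (simp add: ennreal_mult_eq_top_iff)
qed

lemma tail_unbounded: "\<exists>\<delta>>0. ennreal M \<le> tail \<delta>"
proof -
  let ?D = "density lborel dens"
  have tail_eq: "tail \<tau> = emeasure ?D {\<tau><..}" for \<tau>
  proof -
    have "emeasure ?D {\<tau><..} = (\<integral>\<^sup>+s. dens s * indicator {\<tau><..} s \<partial>lborel)"
      by (rule emeasure_density) (auto simp: greaterThan_borel)
    then show ?thesis by (simp add: tail_def mult.commute)
  qed
  have "(\<Union>k. {1 / real (Suc k)<..}) = {0<..}"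
  proof (intro equalityI subsetI)
    fix x :: real assume "x \<in> (\<Union>k. {1 / real (Suc k)<..})"
    then obtain k where "1 / real (Suc k) < x" by auto
    then show "x \<in> {0<..}" using less_trans[of 0 "1 / real (Suc k)" x] by simp
  next
    fix x :: real assume "x \<in> {0<..}"
    then obtain k where "inverse (real (Suc k)) < x" using reals_Archimedean by auto
    then show "x \<in> (\<Union>k. {1 / real (Suc k)<..})" by (auto simp: inverse_eq_divide)
  qed
  moreover have "incseq (\<lambda>k. {1 / real (Suc k)<..})"
    by (intro incseq_SucI) (auto simp: frac_le)
  moreover have "range (\<lambda>k. {1 / real (Suc k)<..}) \<subseteq> sets ?D" by auto
  ultimately have "(SUP k. tail (1 / real (Suc k))) = emeasure ?D {0<..}"
    using SUP_emeasure_incseq[of "\<lambda>k. {1 / real (Suc k)<..}" ?D] by (simp add: tail_eq)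
  also have "\<dots> = \<infinity>"
    using nn_integral_dens_infinite tail_eq[of 0] by (simp add: tail_def)
  finally have SUP_eq: "(SUP k. tail (1 / real (Suc k))) = \<infinity>" .
  have "ennreal M < (SUP k. tail (1 / real (Suc k)))" unfolding SUP_eq by simp
  then obtain k where "ennreal M < tail (1 / real (Suc k))" by (auto simp: less_SUP_iff)
  then show ?thesis by (intro exI[of _ "1 / real (Suc k)"]) auto
qed

definition F :: "real \<Rightarrow> real" where "F \<tau> = enn2real (tail \<tau>)"

lemma tail_eq_F: "\<tau> > 0 \<Longrightarrow> tail \<tau> = ennreal (F \<tau>)"
  using tail_finite by (simp add: F_def less_top[symmetric])

lemma F_nonneg: "F \<tau> \<ge> 0" by (simp add: F_def)

lemma F_antimono:
  assumes "0 < a" "a \<le> b"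
  shows "F b \<le> F a"
proof -
  have "tail b \<le> tail a" by (rule tail_antimono[OF assms(2)])
  then have "ennreal (F b) \<le> ennreal (F a)" using tail_eq_F[of a] tail_eq_F[of b] assms by simp
  then show ?thesis using F_nonneg[of a] by (subst (asm) ennreal_le_iff) auto
qed

lemma F_gap:
  assumes "0 < a" "a < b"
  shows "F b + (b - a) * (A_conj a * b powr (-2 - p)) \<le> F a"
proof -
  have c: "(b - a) * (A_conj a * b powr (-2 - p)) \<ge> 0" using assms A_conj_nonneg by simp
  have g: "tail b + ennreal ((b - a) * (A_conj a * b powr (-2 - p))) \<le> tail a"
    by (rule tail_gap[OF assms])
  have "ennreal (F b + (b - a) * (A_conj a * b powr (-2 - p))) = ennreal (F b) + ennreal ((b - a) * (A_conj a * b powr (-2 - p)))"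
    using c F_nonneg[of b] by simp
  also have "\<dots> \<le> ennreal (F a)" using g tail_eq_F[of a] tail_eq_F[of b] assms by simp
  finally show ?thesis using F_nonneg[of a] by (subst (asm) ennreal_le_iff) auto
qed

lemma F_ge_A_conj:
  assumes "\<tau> > 0"
  shows "A_conj \<tau> / \<tau> * (\<tau> powr (-p) / p) \<le> F \<tau>"
proof -
  have "ennreal (A_conj \<tau> / \<tau> * (\<tau> powr (-p) / p)) \<le> ennreal (F \<tau>)"
    using tail_ge_A_conj[OF assms] tail_eq_F[OF assms] by simp
  then show ?thesis using F_nonneg[of \<tau>] by (subst (asm) ennreal_le_iff) auto
qed

lemma F_unbounded: "\<exists>\<delta>>0. M \<le> F \<delta>"
proof -
  obtain \<delta> where d: "\<delta> > 0" "ennreal M \<le> tail \<delta>" using tail_unbounded by blast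
  then have "ennreal M \<le> ennreal (F \<delta>)" using tail_eq_F by simp
  then have "M \<le> F \<delta>" using F_nonneg[of \<delta>] by (cases "M \<ge> 0") (subst (asm) ennreal_le_iff, auto)
  then show ?thesis using d by blast
qed

lemma nn_integral_dens_Ioc_le:
  assumes \<tau>0: "\<tau>0 > 0" and \<tau>: "0 < \<tau>" and d: "d < A \<tau>0 / \<tau>0"
  shows "(\<integral>\<^sup>+s. indicator {\<tau><..d} s * dens s \<partial>lborel) \<le> ennreal (\<tau>0 * (\<tau> powr (-p) / p))"
proof -
  have "indicator {\<tau><..d} u * dens u \<le> ennreal \<tau>0 * (indicator {\<tau><..} u * ennreal (u powr (-1 - p)))"
    for u :: real
  proof (cases "u \<in> {\<tau><..d}")
    case True
    then have u: "u > 0" "u \<le> d" using \<tau> by auto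
    have "A_conj u * u powr (-2 - p) \<le> \<tau>0 * u * u powr (-2 - p)"
      using A_conj_le_linear[OF \<tau>0, of u] u d by (intro mult_right_mono) auto
    also have "\<tau>0 * u * u powr (-2 - p) = \<tau>0 * u powr (-1 - p)"
      using u by (simp add: powr_diff powr_minus field_simps power2_eq_square)
    finally have "dens u \<le> ennreal (\<tau>0 * u powr (-1 - p))"
      unfolding dens_def by (rule ennreal_leI)
    then show ?thesis using True \<tau>0 u by (simp add: ennreal_mult)
  qed simp
  then have "(\<integral>\<^sup>+s. indicator {\<tau><..d} s * dens s \<partial>lborel)
      \<le> (\<integral>\<^sup>+s. ennreal \<tau>0 * (indicator {\<tau><..} s * ennreal (s powr (-1 - p))) \<partial>lborel)"
    by (intro nn_integral_mono)
  also have "\<dots> = ennreal \<tau>0 * ennreal (\<tau> powr (-p) / p)"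
    by (subst nn_integral_cmult) (measurable, simp add: nn_integral_powr_Ioi[OF \<tau> p_pos])
  also have "\<dots> = ennreal (\<tau>0 * (\<tau> powr (-p) / p))"
    using \<tau>0 p_pos by (simp add: ennreal_mult[symmetric])
  finally show ?thesis .
qed

lemma F_le:
  assumes \<tau>0: "\<tau>0 > 0" and \<tau>: "0 < \<tau>" "\<tau> \<le> d" and d: "d < A \<tau>0 / \<tau>0"
  shows "F \<tau> \<le> \<tau>0 * (\<tau> powr (-p) / p) + F d"
proof -
  have "ennreal (F \<tau>) = (\<integral>\<^sup>+s. indicator {\<tau><..d} s * dens s \<partial>lborel) + ennreal (F d)"
    using tail_split[OF \<tau>(2)] tail_eq_F[OF \<tau>(1)] tail_eq_F[of d] \<tau> by simp
  also have "\<dots> \<le> ennreal (\<tau>0 * (\<tau> powr (-p) / p)) + ennreal (F d)"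
    using nn_integral_dens_Ioc_le[OF \<tau>0 \<tau>(1) d] by (rule add_right_mono)
  also have "\<dots> = ennreal (\<tau>0 * (\<tau> powr (-p) / p) + F d)"
    using \<tau>0 p_pos F_nonneg[of d] by simp
  finally show ?thesis using \<tau>0 p_pos F_nonneg[of d] by (subst (asm) ennreal_le_iff) auto
qed

lemma powr_F_small:
  assumes tp: "t > 0"
  shows "\<exists>\<tau>>0. \<tau> powr p * F \<tau> < t"
proof -
  define \<tau>0 where "\<tau>0 = p * t / 2"
  have t0: "\<tau>0 > 0" using tp p_pos by (simp add: \<tau>0_def)
  define d where "d = (A \<tau>0 / \<tau>0) / 2"
  have d: "d > 0" "d < A \<tau>0 / \<tau>0" using A_quotient_pos[OF t0] by (auto simp: d_def)
  define K where "K = F d + 1"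
  have K: "K \<ge> 1" using F_nonneg[of d] by (simp add: K_def)
  define x where "x = t / (4 * K)"
  have x: "x > 0" using tp K by (simp add: x_def)
  define \<tau> where "\<tau> = min (d / 2) (x powr (1 / p))"
  have t: "\<tau> > 0" "\<tau> \<le> d" using d x by (auto simp: \<tau>_def)
  have tpx: "\<tau> powr p \<le> x"
  proof -
    have "\<tau> powr p \<le> (x powr (1 / p)) powr p"
      using t p_pos by (intro powr_mono2) (auto simp: \<tau>_def)
    also have "\<dots> = x" using x p_pos by (simp add: powr_powr)
    finally show ?thesis .
  qed
  have "\<tau> powr p * F \<tau> \<le> \<tau> powr p * (\<tau>0 * (\<tau> powr (-p) / p) + F d)"
    using F_le[OF t0 t d(2)] by (intro mult_left_mono) auto
  also have "\<dots> = \<tau>0 / p + \<tau> powr p * F d"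
    using t p_pos by (simp add: algebra_simps powr_minus divide_inverse)
  also have "\<tau>0 / p = t / 2" using p_pos by (simp add: \<tau>0_def)
  also have "\<tau> powr p * F d \<le> x * K"
    using tpx F_nonneg[of d] K x by (intro mult_mono) (auto simp: K_def)
  also have "x * K = t / 4" using K by (simp add: x_def)
  finally have "\<tau> powr p * F \<tau> \<le> t / 2 + t / 4" by simp
  also have "\<dots> < t" using tp by simp
  finally show ?thesis using t by blast
qed

definition E :: "real \<Rightarrow> real" where
  "E \<tau> = \<tau> powr (1 + p) * F \<tau>"

lemma E_nonneg: "E \<tau> \<ge> 0"
  by (simp add: E_def F_nonneg)

lemma E_0: "E 0 = 0"
  by (simp add: E_def)

lemma E_eq_mult: "\<tau> > 0 \<Longrightarrow> E \<tau> = \<tau> * (\<tau> powr p * F \<tau>)"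
  by (simp add: E_def powr_add)

lemma E_fun_eq:
  assumes "\<tau> \<ge> 0"
  shows "E_fun n A \<tau> = ennreal (E \<tau>)"
proof -
  have "(\<integral>\<^sup>+s. indicator {\<tau><..} s * e2ennreal (young_conj (\<lambda>\<tau>. ereal (A \<tau>)) s)
            * ennreal (s powr (- 1 - nprime n)) \<partial>lborel) = tail \<tau>"
    unfolding tail_def using A_conj_nonneg
    by (intro nn_integral_cong) (simp add: young_conj_A dens_def nprime_eq ennreal_mult mult.assoc)
  then have "E_fun n A \<tau> = ennreal (\<tau> powr (1 + p)) * tail \<tau>"
    by (simp add: E_fun_def nprime_eq)
  then show ?thesis
    using assms tail_eq_F[of \<tau>] F_nonneg[of \<tau>]
    by (cases "\<tau> = 0") (simp_all add: E_def ennreal_mult)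
qed

lemma E_ge_A_conj:
  assumes "\<tau> > 0"
  shows "A_conj \<tau> / p \<le> E \<tau>"
proof -
  have "A_conj \<tau> / p = \<tau> * (\<tau> powr p * (A_conj \<tau> / \<tau> * (\<tau> powr (-p) / p)))"
    using assms by (simp add: powr_minus field_simps)
  also have "\<dots> \<le> \<tau> * (\<tau> powr p * F \<tau>)"
    using F_ge_A_conj[OF assms] assms by (intro mult_left_mono) auto
  finally show ?thesis using E_eq_mult[OF assms] by simp
qed

lemma E_superlinear:
  obtains T where "T > 0" "\<And>\<tau>. \<tau> \<ge> T \<Longrightarrow> \<tau> * t \<le> E \<tau>"
proof -
  define M where "M = p * (\<bar>t\<bar> + 1)"
  define T where "T = max 1 (A M / p)"
  have "\<tau> * t \<le> E \<tau>" if \<tau>: "\<tau> \<ge> T" for \<tau>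
  proof -
    have \<tau>_pos: "\<tau> > 0" using \<tau> by (simp add: T_def)
    have "(\<bar>t\<bar> + 1) * \<tau> - A M / p = (M * \<tau> - A M) / p"
      using p_pos by (simp add: M_def field_simps)
    also have "\<dots> \<le> A_conj \<tau> / p"
      using A_conj_ge[of M \<tau>] p_pos by (simp add: M_def divide_right_mono)
    also have "\<dots> \<le> E \<tau>" by (rule E_ge_A_conj[OF \<tau>_pos])
    finally have "(\<bar>t\<bar> + 1) * \<tau> - A M / p \<le> E \<tau>" .
    moreover have "A M / p \<le> \<tau>" using \<tau> by (simp add: T_def)
    moreover have "\<tau> * t \<le> \<tau> * \<bar>t\<bar>" using \<tau>_pos by (intro mult_left_mono) auto
    ultimately show ?thesis by (simp add: algebra_simps)
  qed
  moreover have "T > 0" by (simp add: T_def)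
  ultimately show ?thesis using that by blast
qed


lemma B_fun_eq_SUP: "B_fun n A t = (SUP \<tau>\<in>{0..}. ereal (\<tau> * t - E \<tau>))"
proof -
  have "B_fun n A t = young_conj (\<lambda>\<tau>. enn2ereal (E_fun n A \<tau>)) t"
    using dim by (simp add: B_fun_def)
  also have "\<dots> = (SUP \<tau>\<in>{0..}. ereal (\<tau> * t - E \<tau>))"
    unfolding young_conj_def by (intro SUP_cong refl) (simp add: E_fun_eq E_nonneg)
  finally show ?thesis .
qed

definition b :: "real \<Rightarrow> real" where
  "b t = real_of_ereal (B_fun n A t)"

lemma B_fun_eq_b: "B_fun n A t = ereal (b t)"
proof -
  obtain T where T: "T > 0" "\<And>\<tau>. \<tau> \<ge> T \<Longrightarrow> \<tau> * t \<le> E \<tau>"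
    using E_superlinear by blast
  have "\<tau> * t - E \<tau> \<le> T * \<bar>t\<bar>" if "\<tau> \<ge> 0" for \<tau>
  proof (cases "\<tau> \<ge> T")
    case True
    then have "\<tau> * t \<le> E \<tau>" by (rule T(2))
    moreover have "0 \<le> T * \<bar>t\<bar>" using T by simp
    ultimately show ?thesis by linarith
  next
    case False
    have "\<tau> * t \<le> \<tau> * \<bar>t\<bar>" using that by (intro mult_left_mono) auto
    also have "\<dots> \<le> T * \<bar>t\<bar>" using False by (intro mult_right_mono) auto
    finally show ?thesis using E_nonneg[of \<tau>] by simp
  qed
  then have "B_fun n A t \<le> ereal (T * \<bar>t\<bar>)"
    unfolding B_fun_eq_SUP by (intro SUP_least) auto
  moreover have "ereal 0 \<le> B_fun n A t"
    unfolding B_fun_eq_SUP by (intro SUP_upper2[of 0]) (auto simp: E_0)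
  ultimately show ?thesis
    unfolding b_def by (intro ereal_real'[symmetric]) auto
qed

lemma b_ge: "\<tau> \<ge> 0 \<Longrightarrow> \<tau> * t - E \<tau> \<le> b t"
  using SUP_upper[of \<tau> "{0..}" "\<lambda>\<tau>. ereal (\<tau> * t - E \<tau>)"]
  by (simp add: B_fun_eq_SUP[symmetric] B_fun_eq_b)

lemma b_least: "(\<And>\<tau>. \<tau> \<ge> 0 \<Longrightarrow> \<tau> * t - E \<tau> \<le> c) \<Longrightarrow> b t \<le> c"
  using SUP_least[of "{0..}" "\<lambda>\<tau>. ereal (\<tau> * t - E \<tau>)" "ereal c"]
  by (simp add: B_fun_eq_SUP[symmetric] B_fun_eq_b)

lemma b_0: "b 0 = 0"
  using b_ge[of 0 0] b_least[of 0 0] E_nonneg by (simp add: E_0)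

lemma b_pos:
  assumes "t > 0"
  shows "b t > 0"
proof -
  obtain \<tau> where \<tau>: "\<tau> > 0" "\<tau> powr p * F \<tau> < t" using powr_F_small[OF assms] by blast
  then have "0 < \<tau> * (t - \<tau> powr p * F \<tau>)" by simp
  also have "\<dots> = \<tau> * t - E \<tau>" using E_eq_mult[OF \<tau>(1)] by (simp add: algebra_simps)
  also have "\<dots> \<le> b t" using b_ge \<tau> by simp
  finally show ?thesis .
qed

lemma convex_b: "convex_on UNIV b"
proof (rule convex_onI)
  fix \<theta> x y :: real assume \<theta>: "0 < \<theta>" "\<theta> < 1"
  show "b ((1 - \<theta>) *\<^sub>R x + \<theta> *\<^sub>R y) \<le> (1 - \<theta>) * b x + \<theta> * b y"
  proof (rule b_least)
    fix \<tau> :: real assume "\<tau> \<ge> 0"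
    have "\<tau> * ((1 - \<theta>) *\<^sub>R x + \<theta> *\<^sub>R y) - E \<tau> = (1 - \<theta>) * (\<tau> * x - E \<tau>) + \<theta> * (\<tau> * y - E \<tau>)"
      by (simp add: algebra_simps)
    also have "\<dots> \<le> (1 - \<theta>) * b x + \<theta> * b y"
      using \<theta> b_ge[OF \<open>\<tau> \<ge> 0\<close>] by (intro add_mono mult_left_mono) auto
    finally show "\<tau> * ((1 - \<theta>) *\<^sub>R x + \<theta> *\<^sub>R y) - E \<tau> \<le> (1 - \<theta>) * b x + \<theta> * b y" .
  qed
qed simp

lemma continuous_on_b: "continuous_on {0<..} b"
  by (rule convex_on_continuous) (auto intro: convex_on_subset[OF convex_b])

text \<open>Moving from \<open>\<mu> \<sigma>\<close> to \<open>\<sigma>\<close> loses at least \<open>(1 - \<mu>) A_conj(\<mu> \<sigma>)\<close>; this is the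
  quantitative decrease of \<open>F\<close> that makes \<open>b(t)/t\<^sup>n\<close> strictly increasing.\<close>
lemma E_le_scaled:
  assumes \<mu>: "0 < \<mu>" "\<mu> < 1" and \<sigma>: "\<sigma> > 0"
  shows "E \<sigma> + (1 - \<mu>) * A_conj (\<mu> * \<sigma>) \<le> \<sigma> powr (1 + p) * F (\<mu> * \<sigma>)"
proof -
  let ?\<tau> = "\<mu> * \<sigma>"
  have \<tau>: "?\<tau> > 0" "?\<tau> < \<sigma>" using \<mu> \<sigma> by auto
  have "\<sigma> powr (1 + p) * ((\<sigma> - ?\<tau>) * (A_conj ?\<tau> * \<sigma> powr (-2 - p))) = (\<sigma> - ?\<tau>) * A_conj ?\<tau> / \<sigma>"
    using \<sigma> by (simp add: powr_add[symmetric] powr_minus divide_inverse)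
  also have "\<dots> = (1 - \<mu>) * A_conj ?\<tau>" using \<sigma> by (simp add: field_simps)
  finally have "E \<sigma> + (1 - \<mu>) * A_conj ?\<tau>
      = \<sigma> powr (1 + p) * (F \<sigma> + (\<sigma> - ?\<tau>) * (A_conj ?\<tau> * \<sigma> powr (-2 - p)))"
    by (simp add: E_def algebra_simps)
  also have "\<dots> \<le> \<sigma> powr (1 + p) * F ?\<tau>"
    using F_gap[OF \<tau>] by (intro mult_left_mono) auto
  finally show ?thesis .
qed

lemma powr_n_minus_1:
  assumes l: "0 < l" "l < 1"
  defines "\<mu> \<equiv> l powr (real n - 1)"
  shows "0 < \<mu>" "\<mu> < 1" "\<mu> powr (1 + p) = l ^ n" "\<mu> * l = l ^ n"
proof -
  have "l powr (real n - 1) < 1 powr (real n - 1)"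
    using l dim by (intro powr_less_mono2) auto
  then show "0 < \<mu>" "\<mu> < 1" using l by (auto simp: \<mu>_def)
  show "\<mu> powr (1 + p) = l ^ n"
    using l dim p_times by (simp add: \<mu>_def powr_powr algebra_simps powr_realpow)
  have "\<mu> * l = l powr (real n - 1) * l powr 1" using l by (simp add: \<mu>_def)
  also have "\<dots> = l powr (real n - 1 + 1)" by (rule powr_add[symmetric])
  also have "\<dots> = l ^ n" using l by (simp add: powr_realpow)
  finally show "\<mu> * l = l ^ n" .
qed

text \<open>Substituting \<open>\<tau> = \<mu> \<sigma>\<close> in the supremum defining \<open>b (l t)\<close>, with \<open>\<mu> = l\<^sup>n\<^sup>-\<^sup>1\<close>.\<close>
lemma b_scaled_le:
  assumes l: "0 < l" "l < 1" and t: "t > 0" and \<tau>0: "\<tau>0 > 0"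
  defines "\<mu> \<equiv> l powr (real n - 1)"
  shows "b (l * t) \<le> max (\<tau>0 * (l * t)) (l ^ n * (b t - (1 - \<mu>) * A_conj \<tau>0))"
proof (rule b_least)
  note \<mu> = powr_n_minus_1[OF l, folded \<mu>_def]
  fix \<tau> :: real assume "\<tau> \<ge> 0"
  show "\<tau> * (l * t) - E \<tau> \<le> max (\<tau>0 * (l * t)) (l ^ n * (b t - (1 - \<mu>) * A_conj \<tau>0))"
  proof (cases "\<tau> \<le> \<tau>0")
    case True
    then have "\<tau> * (l * t) \<le> \<tau>0 * (l * t)" using l t by (intro mult_right_mono) auto
    then show ?thesis using E_nonneg[of \<tau>] by simp
  next
    case False
    define \<sigma> where "\<sigma> = \<tau> / \<mu>"
    have \<sigma>: "\<sigma> > 0" "\<tau> = \<mu> * \<sigma>" using False \<tau>0 \<mu> by (auto simp: \<sigma>_def)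
    have "E \<tau> = l ^ n * (\<sigma> powr (1 + p) * F \<tau>)"
      using \<sigma> \<mu> by (simp add: E_def powr_mult)
    then have "\<tau> * (l * t) - E \<tau> = l ^ n * (\<sigma> * t - \<sigma> powr (1 + p) * F \<tau>)"
      using \<sigma>(2) \<mu>(4) by (simp add: algebra_simps)
    also have "\<dots> \<le> l ^ n * (\<sigma> * t - E \<sigma> - (1 - \<mu>) * A_conj \<tau>)"
      using E_le_scaled[OF \<mu>(1,2) \<sigma>(1)] \<sigma>(2) l by (intro mult_left_mono) auto
    also have "\<dots> \<le> l ^ n * (b t - (1 - \<mu>) * A_conj \<tau>0)"
    proof -
      have "(1 - \<mu>) * A_conj \<tau>0 \<le> (1 - \<mu>) * A_conj \<tau>"
        using A_conj_mono[of \<tau>0 \<tau>] False \<mu> by (intro mult_left_mono) auto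
      then show ?thesis using b_ge[of \<sigma> t] \<sigma> l by (intro mult_left_mono) auto
    qed
    finally show ?thesis by simp
  qed
qed

lemma b_quotient_less:
  assumes t: "0 < t1" "t1 < t2"
  shows "b t1 / t1 ^ n < b t2 / t2 ^ n"
proof -
  define l where "l = t1 / t2"
  define \<mu> where "\<mu> = l powr (real n - 1)"
  define \<tau>0 where "\<tau>0 = b t1 / (2 * t1)"
  have l: "0 < l" "l < 1" and t1: "t1 = l * t2" using t by (auto simp: l_def)
  have \<tau>0: "\<tau>0 > 0" using b_pos t by (simp add: \<tau>0_def)
  have "b t1 \<le> max (b t1 / 2) (l ^ n * (b t2 - (1 - \<mu>) * A_conj \<tau>0))"
    using b_scaled_le[OF l _ \<tau>0, of t2] t unfolding t1[symmetric] \<mu>_def by (simp add: \<tau>0_def)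
  then have "b t1 \<le> l ^ n * (b t2 - (1 - \<mu>) * A_conj \<tau>0)"
    using b_pos[of t1] t by (simp add: max_def split: if_splits)
  also have "\<dots> < l ^ n * b t2"
    using l A_conj_pos[OF \<tau>0] powr_n_minus_1(2)[OF l] by (simp add: \<mu>_def)
  finally have "b t1 < (t1 / t2) ^ n * b t2" by (simp add: l_def)
  then show ?thesis using t by (simp add: field_simps)
qed

text \<open>Young's inequality for the pair \<open>t\<^sup>n\<close> and \<open>\<tau>\<^sup>n\<^sup>'\<close>, with \<open>n' = 1 + p\<close>.\<close>
lemma mult_le_powr_plus:
  assumes M: "M > 0" and \<tau>: "\<tau> \<ge> 0" and t: "t \<ge> 0"
  shows "\<tau> * t \<le> M * \<tau> powr (1 + p) + t ^ n / M ^ (n - 1)"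
proof (cases "t \<le> M * \<tau> powr p")
  case True
  then have "\<tau> * t \<le> \<tau> * (M * \<tau> powr p)" using \<tau> by (intro mult_left_mono)
  also have "\<dots> = M * \<tau> powr (1 + p)"
    using \<tau> by (cases "\<tau> = 0") (simp_all add: powr_add)
  moreover have "0 \<le> t ^ n / M ^ (n - 1)" using M t by simp
  ultimately show ?thesis by linarith
next
  case False
  have "\<tau> = (\<tau> powr p) ^ (n - 1)"
    using \<tau> dim p_times by (cases "\<tau> = 0") (simp_all add: powr_realpow[symmetric] powr_powr)
  also have "\<dots> \<le> (t / M) ^ (n - 1)"
    using False M \<tau> by (intro power_mono) (auto simp: field_simps)
  finally have "\<tau> * t \<le> (t / M) ^ (n - 1) * t" using t by (intro mult_right_mono)
  also have "\<dots> = t ^ n / M ^ (n - 1)"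
    using dim by (cases n) (simp_all add: power_divide)
  moreover have "0 \<le> M * \<tau> powr (1 + p)" using M by simp
  ultimately show ?thesis by linarith
qed

lemma b_le_power:
  assumes M: "M > 0" and \<delta>: "\<delta> > 0" "M \<le> F \<delta>" and t: "0 < t" "t < A_conj \<delta> / (p * \<delta>)"
  shows "b t \<le> t ^ n / M ^ (n - 1)"
proof (rule b_least)
  fix \<tau> :: real assume \<tau>: "\<tau> \<ge> 0"
  show "\<tau> * t - E \<tau> \<le> t ^ n / M ^ (n - 1)"
  proof (cases "\<tau> \<le> \<delta>")
    case True
    have "M * \<tau> powr (1 + p) \<le> E \<tau>"
    proof (cases "\<tau> = 0")
      case False
      then have "M \<le> F \<tau>" using F_antimono[of \<tau> \<delta>] True \<tau> \<delta> by simp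
      then have "\<tau> powr (1 + p) * M \<le> \<tau> powr (1 + p) * F \<tau>" by (intro mult_left_mono) auto
      then show ?thesis by (simp add: E_def mult.commute)
    qed (simp add: E_0)
    with mult_le_powr_plus[of M \<tau> t] M \<tau> t show ?thesis by simp
  next
    case False
    have "A_conj \<delta> / \<delta> \<le> A_conj \<tau> / \<tau>" using \<delta> False by (intro A_conj_quotient_mono) auto
    have "\<tau> * t \<le> \<tau> * (A_conj \<delta> / (p * \<delta>))" using t \<tau> by (intro mult_left_mono) auto
    also have "\<dots> \<le> A_conj \<tau> / p" using \<open>A_conj \<delta> / \<delta> \<le> _\<close> \<delta> False p_pos by (simp add: field_simps)
    also have "\<dots> \<le> E \<tau>" using E_ge_A_conj \<delta> False by simp
    finally have "\<tau> * t \<le> E \<tau>" .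
    moreover have "0 \<le> t ^ n / M ^ (n - 1)" using t M by simp
    ultimately show ?thesis by linarith
  qed
qed

lemma b_quotient_tendsto_0: "((\<lambda>t. b t / t ^ n) \<longlongrightarrow> 0) (at_right 0)"
proof (rule order_tendstoI)
  fix a :: real assume "a < 0"
  then show "\<forall>\<^sub>F t in at_right 0. a < b t / t ^ n"
    using b_pos by (auto simp: eventually_at_right_field intro!: exI[of _ 1] le_less_trans[of a 0])
next
  fix \<epsilon> :: real assume \<epsilon>: "\<epsilon> > 0"
  define M where "M = max 1 (2 / \<epsilon>)"
  have "2 / \<epsilon> \<le> M" by (simp add: M_def)
  then have "2 \<le> \<epsilon> * M" using \<epsilon> by (simp add: field_simps)
  then have M: "M \<ge> 1" "1 / M < \<epsilon>" using \<epsilon> by (auto simp: M_def field_simps)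
  obtain \<delta> where \<delta>: "\<delta> > 0" "M \<le> F \<delta>" using F_unbounded by blast
  have m: "A_conj \<delta> / (p * \<delta>) > 0" using A_conj_pos[OF \<delta>(1)] p_pos \<delta> by simp
  have "b t / t ^ n < \<epsilon>" if t: "0 < t" "t < A_conj \<delta> / (p * \<delta>)" for t
  proof -
    have "b t / t ^ n \<le> 1 / M ^ (n - 1)"
      using b_le_power[OF _ \<delta> t] M t by (simp add: divide_le_eq field_simps)
    also have "\<dots> \<le> 1 / M"
      using M dim by (intro divide_left_mono) (auto intro: power_increasing[of 1, simplified])
    finally show ?thesis using M by simp
  qed
  with m show "\<forall>\<^sub>F t in at_right 0. b t / t ^ n < \<epsilon>"
    unfolding eventually_at_right_field by blast
qed

lemma B_regular: "B_regular n A b"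
proof
  show "strict_mono_on {0<..} (\<lambda>t. b t / t ^ n)"
    by (rule strict_mono_onI) (use b_quotient_less in auto)
qed (use dim in \<open>simp_all add: B_fun_eq_b b_0 continuous_on_b b_quotient_tendsto_0\<close>)

end

theorem lemma4p7:
  fixes n :: nat and A \<phi> :: "real \<Rightarrow> real"
  assumes "n \<ge> 1"
    and "young_function A" and "cond_C1 n A" and "cond_C2 A" and "cond_C3 n A"
    and "gauge_function n \<phi>"
  shows "(\<forall>r>0. strict_mono_on {0..} (J_fun n A \<phi> r) \<and> bij_betw (J_fun n A \<phi> r) {0..} {0..})
     \<and> (\<forall>s>0. antimono_on {0<..} (\<lambda>r. J_inv n A \<phi> r s))
     \<and> (\<forall>s>0. \<forall>t>0. \<forall>r>0. ereal (\<phi> (J_inv n A \<phi> r (s * t)))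
            \<le> ereal (\<phi> t) + ereal (t ^ n / r) * B_fun n A s)"
proof -
  obtain b where "B_regular n A b"
  proof (cases "n = 1")
    case True
    with assms(2,4,5) show ?thesis using B_regular_dim1 that by blast
  next
    case False
    with assms(1-5) interpret young_highdim n A by unfold_locales simp_all
    from B_regular show ?thesis by (rule that)
  qed
  with assms(6) interpret J_setting n A b \<phi> by (simp add: J_setting_def J_setting_axioms_def)
  have "ereal (\<phi> (J_inv n A \<phi> r (s * t))) \<le> ereal (\<phi> t) + ereal (t ^ n / r) * B_fun n A s"
    if "s > 0" "t > 0" "r > 0" for s t r
    using \<phi>_J_inv_le[OF that] that by (simp add: B_eq)
  then show ?thesis using J_fun_strict_mono J_fun_bij J_inv_antimono by blast
qed

end
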